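(* For every $n\in\mathbb N$, the subfunctor $P^{\mathbf{FA}}\otimes\overline P^{\otimes n}$ of $P^{\mathbf{FA}}\otimes(P^{\mathbf{FA}})^{\otimes n}\cong P^{\mathbf{FA}}_{\mathbf{n+1}}$ is a direct summand, hence is projective in $\mathcal F(\mathbf{FA})$. Moreover there is an isomorphism $$P^{\mathbf{FA}}_{\mathbf{n+1}}\cong P^{\mathbf{FA}}\otimes(\overline P\oplus\overline\Bbbk)^{\otimes n}\cong\bigoplus_{k=0}^n\big(P^{\mathbf{FA}}\otimes\overline P^{\otimes k}\big)^{\oplus\binom nk}.$$
   Context: Let $\Bbbk$ be a field. $\mathbf{FA}$ denotes the category of finite sets and all maps, and $\mathbf{FI}$, $\mathbf{FS}$, $\mathbf{FB}$ its wide subcategories of injections, surjections and bijections respectively; $\mathbf n=\{1,\dots,n\}$ for $n\in\mathbb N$ ($\mathbf 0=\emptyset$), and $\mathfrak S_n$ is the symmetric group. For a category $\mathcal C$, $\Bbbk\mathcal C(X,Y)$ is the $\Bbbk$-vector space with basis $\mathcal C(X,Y)$. A $\Bbbk\mathbf{FA}$-module is a functor from $\mathbf{FA}$ to $\Bbbk$-vector spaces (these form the abelian category $\mathcal F(\mathbf{FA})$); $\otimes$ denotes the pointwise tensor product over $\Bbbk$, and $\hom_{\Bbbk\mathbf{FA}}$ denotes natural transformations. $P^{\mathbf{FA}}_{\mathbf n}:=\Bbbk\mathbf{FA}(\mathbf n,-)$, so $P^{\mathbf{FA}}_{\mathbf n}(X)\cong\Bbbk[X]^{\otimes n}$ (where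 $\Bbbk[X]$ has basis $\{[x]:x\in X\}$), with the right $\mathfrak S_n$-action by precomposition, equivalently place permutation of tensor factors; write $P^{\mathbf{FA}}:=P^{\mathbf{FA}}_{\mathbf 1}$. Let $\overline{\Bbbk}$ be the functor with value $\Bbbk$ on non-empty sets (all maps acting by the identity) and $0$ on $\emptyset$, and $\Bbbk_{\mathbf 0}$ the functor with value $\Bbbk$ on $\emptyset$ and $0$ on non-empty sets. $\overline P$ is the kernel of the surjection $P^{\mathbf{FA}}\to\overline\Bbbk$, $[x]\mapsto 1$; thus $\overline P(X)=\{\sum_x a_x[x]:\sum_x a_x=0\}$. For $n\ge1$, $\overline P^{\otimes n}$ is the $n$-fold pointwise tensor power, a subfunctor of $P^{\mathbf{FA}}_{\mathbf n}$ stable under the place-permutation right action of $\mathfrak S_n$; by convention $\overline P^{\otimes 0}:=\overline\Bbbk$. *)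

theory Defs
  imports Main
begin

text \<open>
  Skeletal model of FA: the object n is the finite set {0..<n}; a morphism
  m -> m' is represented by any f :: nat => nat with f i < m' for i < m
  (only its restriction to {0..<m} matters).  A kFA-module is modelled
  concretely: its value at m is a k-linear subspace of a function space
  'z => 'k (pointwise operations); every k-vector space embeds in such a
  space, so nothing is lost.
\<close>

definition famap :: "nat \<Rightarrow> nat \<Rightarrow> (nat \<Rightarrow> nat) \<Rightarrow> bool" where
  "famap m m' f \<longleftrightarrow> (\<forall>i<m. f i < m')"

definition subsp :: "('z \<Rightarrow> 'k::field) set \<Rightarrow> bool" where
  "subsp V \<longleftrightarrow> (\<lambda>_. 0) \<in> V \<and> (\<forall>u\<in>V. \<forall>v\<in>V. (\<lambda>z. u z + v z) \<in> V)
      \<and> (\<forall>c. \<forall>u\<in>V. (\<lambda>z. c * u z) \<in> V)"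

definition lin_on :: "('z \<Rightarrow> 'k::field) set \<Rightarrow> (('z \<Rightarrow> 'k) \<Rightarrow> ('y \<Rightarrow> 'k)) \<Rightarrow> bool" where
  "lin_on V T \<longleftrightarrow> (\<forall>u\<in>V. \<forall>v\<in>V. T (\<lambda>z. u z + v z) = (\<lambda>y. T u y + T v y))
      \<and> (\<forall>c. \<forall>u\<in>V. T (\<lambda>z. c * u z) = (\<lambda>y. c * T u y))"

type_synonym ('z,'k) fa_obj = "nat \<Rightarrow> ('z \<Rightarrow> 'k) set"
type_synonym ('z,'k) fa_act = "nat \<Rightarrow> nat \<Rightarrow> (nat \<Rightarrow> nat) \<Rightarrow> ('z \<Rightarrow> 'k) \<Rightarrow> ('z \<Rightarrow> 'k)"

definition fa_module :: "('z,'k::field) fa_obj \<Rightarrow> ('z,'k) fa_act \<Rightarrow> bool" where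
  "fa_module M A \<longleftrightarrow>
     (\<forall>m. subsp (M m)) \<and>
     (\<forall>m m' f. famap m m' f \<longrightarrow> lin_on (M m) (A m m' f) \<and> A m m' f ` M m \<subseteq> M m') \<and>
     (\<forall>m m' f g. famap m m' f \<longrightarrow> (\<forall>i<m. f i = g i) \<longrightarrow> (\<forall>v\<in>M m. A m m' f v = A m m' g v)) \<and>
     (\<forall>m. \<forall>v\<in>M m. A m m id v = v) \<and>
     (\<forall>m m' m'' f g. famap m m' f \<longrightarrow> famap m' m'' g \<longrightarrow>
        (\<forall>v\<in>M m. A m m'' (g \<circ> f) v = A m' m'' g (A m m' f v)))"

definition fa_nat :: "('z,'k::field) fa_obj \<Rightarrow> ('z,'k) fa_act \<Rightarrow> ('y,'k) fa_obj \<Rightarrow> ('y,'k) fa_act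
      \<Rightarrow> (nat \<Rightarrow> ('z \<Rightarrow> 'k) \<Rightarrow> ('y \<Rightarrow> 'k)) \<Rightarrow> bool" where
  "fa_nat M A N B \<eta> \<longleftrightarrow> (\<forall>m. lin_on (M m) (\<eta> m) \<and> \<eta> m ` M m \<subseteq> N m) \<and>
     (\<forall>m m' f. famap m m' f \<longrightarrow> (\<forall>v\<in>M m. \<eta> m' (A m m' f v) = B m m' f (\<eta> m v)))"

definition fa_isomorphic :: "('z,'k::field) fa_obj \<Rightarrow> ('z,'k) fa_act \<Rightarrow> ('y,'k) fa_obj \<Rightarrow> ('y,'k) fa_act \<Rightarrow> bool" where
  "fa_isomorphic M A N B \<longleftrightarrow> (\<exists>\<eta>. fa_nat M A N B \<eta> \<and> (\<forall>m. bij_betw (\<eta> m) (M m) (N m)))"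

text \<open>Projectivity in F(FA): lifting along epimorphisms (= pointwise surjective
  natural transformations) between arbitrary modules, here valued in 'a => 'k.\<close>
definition fa_projective :: "'a itself \<Rightarrow> ('z,'k::field) fa_obj \<Rightarrow> ('z,'k) fa_act \<Rightarrow> bool" where
  "fa_projective T M A \<longleftrightarrow>
     (\<forall>(G::('a,'k) fa_obj) AG (H::('a,'k) fa_obj) AH p \<phi>.
        fa_module G AG \<longrightarrow> fa_module H AH \<longrightarrow> fa_nat G AG H AH p \<longrightarrow> (\<forall>m. p m ` G m = H m) \<longrightarrow>
        fa_nat M A H AH \<phi> \<longrightarrow>
        (\<exists>\<psi>. fa_nat M A G AG \<psi> \<and> (\<forall>m. \<forall>v\<in>M m. p m (\<psi> m v) = \<phi> m v)))"

text \<open>Tensor powers of permutation modules as functions on tuples.\<close>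
definition tuples :: "'x set \<Rightarrow> nat \<Rightarrow> 'x list set" where
  "tuples D r = {xs. length xs = r \<and> set xs \<subseteq> D}"

text \<open>Linear extension of [x_1,...,x_r] |-> [g x_1,...,g x_r].\<close>
definition lpush :: "'x set \<Rightarrow> ('x \<Rightarrow> 'x) \<Rightarrow> ('x list \<Rightarrow> 'k::field) \<Rightarrow> ('x list \<Rightarrow> 'k)" where
  "lpush D g \<phi> = (\<lambda>ys. \<Sum>xs\<in>{xs \<in> tuples D (length ys). map g xs = ys}. \<phi> xs)"

text \<open>P^FA_r (m) = k[m]^{\<otimes> r}, as functions on r-tuples of elements of m.\<close>
definition PFA :: "nat \<Rightarrow> (nat list, 'k::field) fa_obj" where
  "PFA r m = {\<phi>. \<forall>xs. xs \<notin> tuples {..<m} r \<longrightarrow> \<phi> xs = 0}"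

definition PFA_act :: "(nat list, 'k::field) fa_act" where
  "PFA_act m m' f = lpush {..<m} f"

text \<open>The subfunctor P \<otimes> Pbar^{\<otimes> k} of P^FA_{k+1}: tensor factors 1..k lie in
  Pbar (coefficient sum zero), factor 0 is P.  For k = 0 this is P = P \<otimes> kbar.\<close>
definition PPbar :: "nat \<Rightarrow> (nat list, 'k::field) fa_obj" where
  "PPbar k m = {\<phi> \<in> PFA (Suc k) m. \<forall>i\<in>{1..k}. \<forall>xs\<in>tuples {..<m} (Suc k).
                  (\<Sum>x<m. \<phi> (xs[i := x])) = 0}"

text \<open>P \<otimes> (Pbar \<oplus> kbar)^{\<otimes> n}: Pbar \<oplus> kbar (m) is modelled on functions on
  nat option (Some x = basis [x], None = the kbar summand), with the Some-part summing
  to zero; the first tensor factor (P) only uses Some.\<close>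
definition optset :: "nat \<Rightarrow> nat option set" where
  "optset m = insert None (Some ` {..<m})"

definition PPbarKbar :: "nat \<Rightarrow> (nat option list, 'k::field) fa_obj" where
  "PPbarKbar n m = {\<Phi>. (\<forall>xs. xs \<notin> {xs \<in> tuples (optset m) (Suc n). hd xs \<noteq> None} \<longrightarrow> \<Phi> xs = 0) \<and>
      (\<forall>i\<in>{1..n}. \<forall>xs\<in>tuples (optset m) (Suc n). (\<Sum>x<m. \<Phi> (xs[i := Some x])) = 0)}"

definition PPbarKbar_act :: "(nat option list, 'k::field) fa_act" where
  "PPbarKbar_act m m' f = lpush (optset m) (map_option f)"

text \<open>\<Oplus>_{k=0}^n (P \<otimes> Pbar^{\<otimes> k})^{\<oplus> (n choose k)}, indexed by (k, copy j, tuple).\<close>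
definition DSum :: "nat \<Rightarrow> (nat \<times> nat \<times> nat list, 'k::field) fa_obj" where
  "DSum n m = {\<Phi>. (\<forall>k j xs. (n < k \<or> n choose k \<le> j) \<longrightarrow> \<Phi> (k, j, xs) = 0) \<and>
      (\<forall>k\<le>n. \<forall>j < n choose k. (\<lambda>xs. \<Phi> (k, j, xs)) \<in> PPbar k m)}"

definition DSum_act :: "(nat \<times> nat \<times> nat list, 'k::field) fa_act" where
  "DSum_act m m' f \<Phi> = (\<lambda>(k, j, ys). lpush {..<m} f (\<lambda>xs. \<Phi> (k, j, xs)) ys)"

end

theory Submission
  imports Defs
begin

text \<open>
  The basic isomorphism is the one-variable identity \<open>P \<otimes> P \<cong> P \<otimes> (Pbar \<oplus> kbar)\<close>,
  \<open>[x\<^sub>0] \<otimes> [x] \<mapsto> [x\<^sub>0] \<otimes> ([x] - [x\<^sub>0]) + [x\<^sub>0] \<otimes> 1\<close>: the first tensor factor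
  supplies a base point, and everything is natural because maps act diagonally.
  Applying it to the tensor slots \<open>1, \<dots>, n\<close> of \<open>P\<^sub>n\<^sub>+\<^sub>1 = P \<otimes> P\<^sup>\<otimes>\<^sup>n\<close> one after the
  other gives \<open>P\<^sub>n\<^sub>+\<^sub>1 \<cong> P \<otimes> (Pbar \<oplus> kbar)\<^sup>\<otimes>\<^sup>n\<close>, and expanding the tensor power by
  which slots carry \<open>kbar\<close> gives the binomial direct sum.  The summand with no \<open>kbar\<close>
  slot is \<open>P \<otimes> Pbar\<^sup>\<otimes>\<^sup>n\<close>; pulling the projection onto it back along the isomorphism
  yields a natural retraction \<open>P\<^sub>n\<^sub>+\<^sub>1 \<rightarrow> P \<otimes> Pbar\<^sup>\<otimes>\<^sup>n\<close> that fixes \<open>P \<otimes> Pbar\<^sup>\<otimes>\<^sup>n\<close>.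
  Its kernel is a complement, and a retract of the projective module \<open>P\<^sub>n\<^sub>+\<^sub>1\<close>
  (Yoneda) is projective.
\<close>

section \<open>Tuples, the linear pushforward, and \<open>P\<^sub>r\<close>\<close>

lemma mem_tuples_nth: "xs \<in> tuples D r \<longleftrightarrow> length xs = r \<and> (\<forall>k<length xs. xs!k \<in> D)"
  by (auto simp: tuples_def set_conv_nth)

lemma finite_tuples: "finite D \<Longrightarrow> finite (tuples D r)"
  unfolding tuples_def using finite_lists_length_eq[of D r] by (simp add: conj_commute)

lemma tuples_list_update_swap:
  assumes "xs[i:=a] \<in> tuples D r" "b \<in> D" shows "xs[i:=b] \<in> tuples D r"
proof -
  have "xs[i:=b]!k \<in> D" if "k < length xs" for k
    using assms that by (cases "k = i") (auto simp: mem_tuples_nth)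
  then show ?thesis using assms(1) by (simp add: mem_tuples_nth)
qed

lemma lpush_add: "lpush D g (\<lambda>z. u z + v z) = (\<lambda>y. lpush D g u y + lpush D g v y)"
  by (auto simp: lpush_def sum.distrib)

lemma lpush_smult: "lpush D g (\<lambda>z. c * u z) = (\<lambda>y. c * lpush D g u y)"
  by (auto simp: lpush_def sum_distrib_left)

lemma lin_on_lpush: "lin_on V (lpush D g)"
  by (simp add: lin_on_def lpush_add lpush_smult)

lemma lpush_comp:
  assumes fin: "finite D" "finite D'" and gD: "g ` D \<subseteq> D'"
  shows "lpush D (h \<circ> g) \<phi> = lpush D' h (lpush D g \<phi>)"
proof
  fix ys
  let ?X = "{xs \<in> tuples D (length ys). map (h \<circ> g) xs = ys}"
  let ?Z = "{zs \<in> tuples D' (length ys). map h zs = ys}"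
  have fX: "finite ?X" using finite_tuples[OF fin(1)] by auto
  have fZ: "finite ?Z" using finite_tuples[OF fin(2)] by auto
  have im: "map g ` ?X \<subseteq> ?Z"
  proof
    fix zs assume "zs \<in> map g ` ?X"
    then obtain xs where xs: "xs \<in> ?X" "zs = map g xs" by blast
    then have "set zs \<subseteq> D'" using gD by (auto simp: tuples_def)
    then show "zs \<in> ?Z" using xs by (auto simp: tuples_def)
  qed
  have "lpush D' h (lpush D g \<phi>) ys = (\<Sum>zs\<in>?Z. \<Sum>xs\<in>{xs \<in> tuples D (length zs). map g xs = zs}. \<phi> xs)"
    by (simp add: lpush_def)
  also have "\<dots> = (\<Sum>zs\<in>?Z. \<Sum>xs\<in>{xs. xs \<in> ?X \<and> map g xs = zs}. \<phi> xs)"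
  proof (rule sum.cong[OF refl])
    fix zs assume "zs \<in> ?Z"
    then have z: "length zs = length ys" "map h zs = ys" by (auto simp: tuples_def)
    have "xs \<in> tuples D (length zs) \<and> map g xs = zs \<longleftrightarrow> xs \<in> ?X \<and> map g xs = zs" for xs
      using z by (auto simp del: map_map simp add: map_map[symmetric])
    then have "{xs \<in> tuples D (length zs). map g xs = zs} = {xs. xs \<in> ?X \<and> map g xs = zs}"
      by blast
    then show "(\<Sum>xs\<in>{xs \<in> tuples D (length zs). map g xs = zs}. \<phi> xs) = (\<Sum>xs\<in>{xs. xs \<in> ?X \<and> map g xs = zs}. \<phi> xs)"
      by simp
  qed
  also have "\<dots> = sum \<phi> ?X" by (rule sum.group[OF fX fZ im])
  finally show "lpush D (h \<circ> g) \<phi> ys = lpush D' h (lpush D g \<phi>) ys"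
    by (simp add: lpush_def)
qed

lemma lpush_id:
  assumes "\<forall>xs. xs \<notin> tuples D r \<longrightarrow> \<phi> xs = 0"
  shows "lpush D id \<phi> = \<phi>"
proof
  fix ys
  have "{xs \<in> tuples D (length ys). map id xs = ys} = (if ys \<in> tuples D (length ys) then {ys} else {})"
    by auto
  then show "lpush D id \<phi> ys = \<phi> ys" using assms by (auto simp: lpush_def tuples_def)
qed

lemma lpush_cong:
  assumes "\<forall>x\<in>D. g x = g' x" shows "lpush D g = lpush D g'"
proof -
  have "\<And>xs. set xs \<subseteq> D \<Longrightarrow> map g xs = map g' xs" using assms by (auto intro!: map_cong)
  then show ?thesis unfolding lpush_def tuples_def by (intro ext sum.cong) auto
qed

lemma lpush_support:
  assumes "\<forall>xs. xs \<notin> tuples D r \<longrightarrow> \<phi> xs = 0" "g ` D \<subseteq> D'" "ys \<notin> tuples D' r"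
  shows "lpush D g \<phi> ys = 0"
proof -
  have "\<phi> xs = 0" if "xs \<in> tuples D (length ys)" "ys = map g xs" for xs
  proof -
    have "xs \<notin> tuples D r" using that assms(2,3) by (auto simp: tuples_def)
    then show "\<phi> xs = 0" using assms(1) by blast
  qed
  then show ?thesis unfolding lpush_def by (intro sum.neutral) auto
qed

lemma famap_image: "famap m m' f \<Longrightarrow> f ` {..<m} \<subseteq> {..<m'}"
  by (auto simp: famap_def)

lemma fa_module_PFA: "fa_module (PFA r :: (nat list, 'k::field) fa_obj) PFA_act"
  unfolding fa_module_def
proof (intro conjI allI impI ballI)
  fix m show "subsp (PFA r m :: (nat list \<Rightarrow> 'k) set)" by (auto simp: subsp_def PFA_def)
next
  fix m m' f assume f: "famap m m' f"
  show "lin_on (PFA r m) (PFA_act m m' f :: (nat list \<Rightarrow> 'k) \<Rightarrow> _)"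
    by (simp add: PFA_act_def lin_on_lpush)
  show "PFA_act m m' f ` PFA r m \<subseteq> (PFA r m' :: (nat list \<Rightarrow> 'k) set)"
    using lpush_support[OF _ famap_image[OF f]] by (auto simp: PFA_act_def PFA_def)
next
  fix m m' f g v assume "famap m m' f" "\<forall>i<m. f i = g i"
  then show "PFA_act m m' f v = PFA_act m m' g v" unfolding PFA_act_def by (subst lpush_cong[of _ f g]) auto
next
  fix m and v :: "nat list \<Rightarrow> 'k" assume "v \<in> PFA r m"
  then show "PFA_act m m id v = v" by (simp add: PFA_act_def PFA_def lpush_id)
next
  fix m m' m'' f g and v :: "nat list \<Rightarrow> 'k" assume f: "famap m m' f" "famap m' m'' g"
  show "PFA_act m m'' (g \<circ> f) v = PFA_act m' m'' g (PFA_act m m' f v)"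
    unfolding PFA_act_def by (rule lpush_comp) (use famap_image[OF f(1)] in auto)
qed

section \<open>Modules, natural transformations, retracts\<close>

lemma lin_on_add: "lin_on V T \<Longrightarrow> u \<in> V \<Longrightarrow> v \<in> V \<Longrightarrow> T (\<lambda>z. u z + v z) = (\<lambda>y. T u y + T v y)"
  by (simp add: lin_on_def)

lemma lin_on_smult: "lin_on V T \<Longrightarrow> u \<in> V \<Longrightarrow> T (\<lambda>z. c * u z) = (\<lambda>y. c * T u y)"
  by (simp add: lin_on_def)

lemma lin_on_mono: "lin_on V T \<Longrightarrow> W \<subseteq> V \<Longrightarrow> lin_on W T"
  unfolding lin_on_def by (meson subsetD)

lemma subsp_add: "subsp V \<Longrightarrow> u \<in> V \<Longrightarrow> v \<in> V \<Longrightarrow> (\<lambda>z. u z + v z) \<in> V"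
  by (simp add: subsp_def)

lemma subsp_smult: "subsp V \<Longrightarrow> u \<in> V \<Longrightarrow> (\<lambda>z. c * u z) \<in> V"
  by (simp add: subsp_def)

lemma subsp_zero: "subsp V \<Longrightarrow> (\<lambda>_. 0) \<in> V"
  by (simp add: subsp_def)

lemma subsp_diff:
  assumes "subsp V" "u \<in> V" "v \<in> V"
  shows "(\<lambda>z. u z - v z) \<in> V"
  using subsp_add[OF assms(1,2) subsp_smult[OF assms(1,3), of "-1"]] by simp

lemma lin_on_zero:
  assumes "lin_on V T" "subsp V" shows "T (\<lambda>_. 0) = (\<lambda>_. 0)"
  using lin_on_smult[OF assms(1) subsp_zero[OF assms(2)], of 0] by simp

lemma lin_on_diff:
  assumes T: "lin_on V T" and V: "subsp V" and u: "u \<in> V" and v: "v \<in> V"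
  shows "T (\<lambda>z. u z - v z) = (\<lambda>y. T u y - T v y)"
  using lin_on_add[OF T u subsp_smult[OF V v, of "-1"]] lin_on_smult[OF T v, of "-1"] by simp

lemma subsp_sum:
  assumes V: "subsp V" and fin: "finite S" and u: "\<forall>x\<in>S. u x \<in> V"
  shows "(\<lambda>z. \<Sum>x\<in>S. c x * u x z) \<in> V"
  using fin u
proof (induction S rule: finite_induct)
  case empty then show ?case using subsp_zero[OF V] by simp
next
  case (insert a S)
  then show ?case
    using subsp_add[OF V subsp_smult[OF V, of "u a" "c a"]] by simp
qed

lemma lin_on_sum:
  assumes T: "lin_on V T" and V: "subsp V" and fin: "finite S" and u: "\<forall>x\<in>S. u x \<in> V"
  shows "T (\<lambda>z. \<Sum>x\<in>S. c x * u x z) = (\<lambda>y. \<Sum>x\<in>S. c x * T (u x) y)"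
  using fin u
proof (induction S rule: finite_induct)
  case empty then show ?case using lin_on_zero[OF T V] by simp
next
  case (insert a S)
  have "(\<lambda>z. c a * u a z) \<in> V" using subsp_smult[OF V] insert.prems by simp
  moreover have "(\<lambda>z. \<Sum>x\<in>S. c x * u x z) \<in> V" using subsp_sum[OF V insert.hyps(1)] insert.prems by simp
  ultimately show ?case
    using lin_on_add[OF T] lin_on_smult[OF T, of "u a" "c a"] insert by simp
qed

lemma fa_module_subsp: "fa_module M A \<Longrightarrow> subsp (M m)"
  by (simp add: fa_module_def)

lemma fa_module_lin: "fa_module M A \<Longrightarrow> famap m m' f \<Longrightarrow> lin_on (M m) (A m m' f)"
  by (simp add: fa_module_def)

lemma fa_module_closed: "fa_module M A \<Longrightarrow> famap m m' f \<Longrightarrow> v \<in> M m \<Longrightarrow> A m m' f v \<in> M m'"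
  unfolding fa_module_def by blast

lemma fa_module_cong:
  "fa_module M A \<Longrightarrow> famap m m' f \<Longrightarrow> (\<forall>i<m. f i = g i) \<Longrightarrow> v \<in> M m \<Longrightarrow> A m m' f v = A m m' g v"
  unfolding fa_module_def by blast

lemma fa_module_comp:
  "fa_module M A \<Longrightarrow> famap m m' f \<Longrightarrow> famap m' m'' g \<Longrightarrow> v \<in> M m
    \<Longrightarrow> A m m'' (g \<circ> f) v = A m' m'' g (A m m' f v)"
  unfolding fa_module_def by blast

lemma fa_nat_lin: "fa_nat M A N B \<eta> \<Longrightarrow> lin_on (M m) (\<eta> m)"
  by (simp add: fa_nat_def)

lemma fa_nat_closed: "fa_nat M A N B \<eta> \<Longrightarrow> v \<in> M m \<Longrightarrow> \<eta> m v \<in> N m"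
  unfolding fa_nat_def by blast

lemma fa_nat_commute:
  "fa_nat M A N B \<eta> \<Longrightarrow> famap m m' f \<Longrightarrow> v \<in> M m \<Longrightarrow> \<eta> m' (A m m' f v) = B m m' f (\<eta> m v)"
  unfolding fa_nat_def by blast

lemma fa_nat_comp:
  assumes \<eta>: "fa_nat M A N B \<eta>" and \<theta>: "fa_nat N B Q C \<theta>"
  shows "fa_nat M A Q C (\<lambda>m v. \<theta> m (\<eta> m v))"
  unfolding fa_nat_def
proof (intro conjI allI impI ballI)
  fix m
  note closed = fa_nat_closed[OF \<eta>, of _ m]
  show "lin_on (M m) (\<lambda>v. \<theta> m (\<eta> m v))"
    unfolding lin_on_def
    using lin_on_add[OF fa_nat_lin[OF \<eta>]] lin_on_add[OF fa_nat_lin[OF \<theta>] closed closed]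
      lin_on_smult[OF fa_nat_lin[OF \<eta>]] lin_on_smult[OF fa_nat_lin[OF \<theta>] closed]
    by simp
  show "(\<lambda>v. \<theta> m (\<eta> m v)) ` M m \<subseteq> Q m"
    using closed fa_nat_closed[OF \<theta>] by blast
next
  fix m m' f v assume "famap m m' f" "v \<in> M m"
  then show "\<theta> m' (\<eta> m' (A m m' f v)) = C m m' f (\<theta> m (\<eta> m v))"
    using fa_nat_commute[OF \<eta>] fa_nat_commute[OF \<theta>] fa_nat_closed[OF \<eta>] by simp
qed

lemma fa_nat_restrict:
  assumes "fa_nat M A N B \<eta>" "\<And>m. M' m \<subseteq> M m"
  shows "fa_nat M' A N B \<eta>"
  using assms lin_on_mono unfolding fa_nat_def by (metis (no_types, lifting) subset_iff image_subset_iff)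

lemma fa_module_subfunctor:
  assumes M: "fa_module M A" and N: "\<And>m. subsp (N m)" "\<And>m. N m \<subseteq> M m"
    and closed: "\<And>m m' f v. famap m m' f \<Longrightarrow> v \<in> N m \<Longrightarrow> A m m' f v \<in> N m'"
  shows "fa_module N A"
  unfolding fa_module_def
proof (intro conjI allI impI ballI)
  fix m m' f assume f: "famap m m' f"
  show "lin_on (N m) (A m m' f)" using lin_on_mono[OF fa_module_lin[OF M f] N(2)] .
  show "A m m' f ` N m \<subseteq> N m'" using closed[OF f] by blast
qed (use M N(1) N(2) in \<open>auto simp: fa_module_def subset_iff\<close>)

lemma fa_isomorphicI:
  assumes \<eta>: "fa_nat M A N B \<eta>"
    and inv_mem: "\<And>m w. w \<in> N m \<Longrightarrow> \<theta> m w \<in> M m"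
    and inv_left: "\<And>m v. v \<in> M m \<Longrightarrow> \<theta> m (\<eta> m v) = v"
    and inv_right: "\<And>m w. w \<in> N m \<Longrightarrow> \<eta> m (\<theta> m w) = w"
  shows "fa_isomorphic M A N B"
  unfolding fa_isomorphic_def
proof (intro exI conjI allI)
  show "fa_nat M A N B \<eta>" by (fact \<eta>)
  show "bij_betw (\<eta> m) (M m) (N m)" for m
    by (rule bij_betw_byWitness[where f'="\<theta> m"]) (use fa_nat_closed[OF \<eta>] assms in auto)
qed

lemma fa_isomorphic_trans:
  assumes "fa_isomorphic M A N B" "fa_isomorphic N B Q C"
  shows "fa_isomorphic M A Q C"
proof -
  obtain \<eta> where \<eta>: "fa_nat M A N B \<eta>" "\<And>m. bij_betw (\<eta> m) (M m) (N m)"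
    using assms(1) unfolding fa_isomorphic_def by blast
  obtain \<theta> where \<theta>: "fa_nat N B Q C \<theta>" "\<And>m. bij_betw (\<theta> m) (N m) (Q m)"
    using assms(2) unfolding fa_isomorphic_def by blast
  have "bij_betw (\<lambda>v. \<theta> m (\<eta> m v)) (M m) (Q m)" for m
    using bij_betw_trans[OF \<eta>(2) \<theta>(2)] by (simp add: comp_def)
  then show ?thesis
    unfolding fa_isomorphic_def using fa_nat_comp[OF \<eta>(1) \<theta>(1)] by blast
qed

definition fa_kernel :: "('z,'k::field) fa_obj \<Rightarrow> (nat \<Rightarrow> ('z \<Rightarrow> 'k) \<Rightarrow> ('y \<Rightarrow> 'k)) \<Rightarrow> ('z,'k) fa_obj" where
  "fa_kernel M \<eta> m = {v \<in> M m. \<eta> m v = (\<lambda>_. 0)}"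

lemma fa_module_kernel:
  assumes M: "fa_module M A" and N: "fa_module N B" and \<eta>: "fa_nat M A N B \<eta>"
  shows "fa_module (fa_kernel M \<eta>) A"
proof (rule fa_module_subfunctor[OF M])
  fix m
  have V: "subsp (M m)" and L: "lin_on (M m) (\<eta> m)"
    using fa_module_subsp[OF M] fa_nat_lin[OF \<eta>] .
  show "subsp (fa_kernel M \<eta> m)"
    using subsp_zero[OF V] lin_on_zero[OF L V] subsp_add[OF V] lin_on_add[OF L]
      subsp_smult[OF V] lin_on_smult[OF L]
    unfolding subsp_def fa_kernel_def by auto
  show "fa_kernel M \<eta> m \<subseteq> M m" by (auto simp: fa_kernel_def)
next
  fix m m' f v assume f: "famap m m' f" and v: "v \<in> fa_kernel M \<eta> m"
  then have "\<eta> m' (A m m' f v) = B m m' f (\<lambda>_. 0)"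
    using fa_nat_commute[OF \<eta> f] by (simp add: fa_kernel_def)
  also have "\<dots> = (\<lambda>_. 0)" using lin_on_zero[OF fa_module_lin[OF N f] fa_module_subsp[OF N]] .
  finally show "A m m' f v \<in> fa_kernel M \<eta> m'"
    using fa_module_closed[OF M f] v by (simp add: fa_kernel_def)
qed

lemma retraction_kernel_complement:
  assumes V: "subsp V" and W: "W \<subseteq> V" "(\<lambda>_. 0) \<in> W"
    and p: "lin_on V p" "\<And>v. v \<in> V \<Longrightarrow> p v \<in> W" "\<And>w. w \<in> W \<Longrightarrow> p w = w"
  shows "W \<inter> {v \<in> V. p v = (\<lambda>_. 0)} = {\<lambda>_. 0}"
    and "{(\<lambda>x. u x + v x) | u v. u \<in> W \<and> v \<in> {v \<in> V. p v = (\<lambda>_. 0)}} = V"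
proof -
  show "W \<inter> {v \<in> V. p v = (\<lambda>_. 0)} = {\<lambda>_. 0}"
    using W p(3) by auto
  show "{(\<lambda>x. u x + v x) | u v. u \<in> W \<and> v \<in> {v \<in> V. p v = (\<lambda>_. 0)}} = V"
  proof (intro set_eqI iffI)
    fix w assume "w \<in> {(\<lambda>x. u x + v x) | u v. u \<in> W \<and> v \<in> {v \<in> V. p v = (\<lambda>_. 0)}}"
    then show "w \<in> V" using subsp_add[OF V] W(1) by blast
  next
    fix w assume w: "w \<in> V"
    have pw: "p w \<in> W" "p w \<in> V" using p(2)[OF w] W(1) by auto
    have "p (\<lambda>x. w x - p w x) = (\<lambda>_. 0)"
      using lin_on_diff[OF p(1) V w pw(2)] p(3)[OF pw(1)] by simp
    moreover have "w = (\<lambda>x. p w x + (w x - p w x))" by simp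
    ultimately show "w \<in> {(\<lambda>x. u x + v x) | u v. u \<in> W \<and> v \<in> {v \<in> V. p v = (\<lambda>_. 0)}}"
      using subsp_diff[OF V w pw(2)] pw(1) by (intro CollectI exI[of _ "p w"] exI[of _ "\<lambda>x. w x - p w x"]) auto
  qed
qed

lemma fa_projective_retract:
  fixes M N :: "('z,'k::field) fa_obj"
  assumes proj: "fa_projective TYPE('a) M A" and sub: "\<And>m. N m \<subseteq> M m"
    and r: "fa_nat M A N A r" and r_fixes: "\<And>m v. v \<in> N m \<Longrightarrow> r m v = v"
  shows "fa_projective TYPE('a) N A"
  unfolding fa_projective_def
proof (intro allI impI)
  fix G H :: "('a,'k::field) fa_obj" and AG AH p \<phi>
  assume G: "fa_module G AG" and H: "fa_module H AH" and p: "fa_nat G AG H AH p"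
    and surj: "\<forall>m. p m ` G m = H m" and \<phi>: "fa_nat N A H AH \<phi>"
  obtain \<psi> where \<psi>: "fa_nat M A G AG \<psi>" "\<forall>m. \<forall>v\<in>M m. p m (\<psi> m v) = \<phi> m (r m v)"
    using proj G H p surj fa_nat_comp[OF r \<phi>] unfolding fa_projective_def by blast
  show "\<exists>\<psi>. fa_nat N A G AG \<psi> \<and> (\<forall>m. \<forall>v\<in>N m. p m (\<psi> m v) = \<phi> m v)"
    using fa_nat_restrict[OF \<psi>(1) sub] \<psi>(2) r_fixes sub by (metis subsetD)
qed

section \<open>Projectivity of \<open>P\<^sub>r\<close> (Yoneda)\<close>

definition basis_vec :: "nat list \<Rightarrow> nat list \<Rightarrow> 'k::field" where
  "basis_vec xs = (\<lambda>ys. if ys = xs then 1 else 0)"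

lemma basis_vec_PFA: "xs \<in> tuples {..<m} r \<Longrightarrow> basis_vec xs \<in> PFA r m"
  by (auto simp: PFA_def basis_vec_def)

lemma basis_vec_expansion:
  assumes "v \<in> PFA r m"
  shows "v = (\<lambda>z. \<Sum>xs\<in>tuples {..<m} r. v xs * basis_vec xs z)"
proof
  fix z
  have fin: "finite (tuples {..<m} r)" by (rule finite_tuples) simp
  have "(\<Sum>xs\<in>tuples {..<m} r. v xs * basis_vec xs z) = (\<Sum>xs\<in>tuples {..<m} r. if z = xs then v xs else 0)"
    by (rule sum.cong) (auto simp: basis_vec_def)
  also have "\<dots> = v z" using assms by (auto simp: PFA_def sum.delta'[OF fin])
  finally show "v z = (\<Sum>xs\<in>tuples {..<m} r. v xs * basis_vec xs z)" by simp
qed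

lemma famap_nth: "xs \<in> tuples {..<m} r \<Longrightarrow> famap r m (nth xs)"
  by (auto simp: famap_def mem_tuples_nth)

lemma lpush_basis_vec:
  assumes "xs \<in> tuples {..<m} r"
  shows "lpush {..<r} (nth xs) (basis_vec [0..<r]) = (basis_vec xs :: nat list \<Rightarrow> 'k::field)"
proof
  fix ys
  have l: "length xs = r" using assms by (simp add: tuples_def)
  let ?A = "{zs \<in> tuples {..<r} (length ys). map (nth xs) zs = ys}"
  have fA: "finite ?A" using finite_tuples[of "{..<r}"] by auto
  have "[0..<r] \<in> ?A \<longleftrightarrow> ys = xs"
    using l map_nth[of xs] by (auto simp: tuples_def)
  moreover have "lpush {..<r} (nth xs) (basis_vec [0..<r]) ys = (\<Sum>zs\<in>?A. if zs = [0..<r] then (1::'k) else 0)"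
    unfolding lpush_def basis_vec_def by simp
  ultimately show "lpush {..<r} (nth xs) (basis_vec [0..<r]) ys = (basis_vec xs ys :: 'k)"
    using sum.delta[OF fA, of "[0..<r]" "\<lambda>_. (1::'k)"] by (simp add: basis_vec_def)
qed

definition yoneda_lift :: "('a,'k::field) fa_act \<Rightarrow> nat \<Rightarrow> ('a \<Rightarrow> 'k) \<Rightarrow> nat \<Rightarrow> (nat list \<Rightarrow> 'k) \<Rightarrow> ('a \<Rightarrow> 'k)" where
  "yoneda_lift A r g m v = (\<lambda>a. \<Sum>xs\<in>tuples {..<m} r. v xs * A r m (nth xs) g a)"

lemma yoneda_lift_natural:
  assumes G: "fa_module G A" and g: "g \<in> G r" and f: "famap m m' f"
  shows "yoneda_lift A r g m' (PFA_act m m' f v) = A m m' f (yoneda_lift A r g m v)"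
proof
  fix a
  define T where "T m = (tuples {..<m} r :: nat list set)" for m
  have finT: "finite (T m)" for m unfolding T_def by (rule finite_tuples) simp
  have mapT: "map f ` T m \<subseteq> T m'" using f by (auto simp: T_def tuples_def famap_def subset_iff)
  have comp: "A r m' (nth (map f xs)) g = A m m' f (A r m (nth xs) g)" if xs: "xs \<in> T m" for xs
  proof -
    have fx: "famap r m (nth xs)" using famap_nth xs unfolding T_def by blast
    have "famap r m' (f \<circ> nth xs)" using f fx by (auto simp: famap_def)
    then have "A r m' (f \<circ> nth xs) g = A r m' (nth (map f xs)) g"
      using fa_module_cong[OF G _ _ g, of m' "f \<circ> nth xs" "nth (map f xs)"] xs
      by (auto simp: T_def tuples_def)
    then show ?thesis using fa_module_comp[OF G fx f g] by simp
  qed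
  have "yoneda_lift A r g m' (PFA_act m m' f v) a
      = (\<Sum>ys\<in>T m'. (\<Sum>xs\<in>{xs \<in> T m. map f xs = ys}. v xs) * A r m' (nth ys) g a)"
    unfolding yoneda_lift_def PFA_act_def lpush_def T_def
    by (rule sum.cong) (auto simp: tuples_def)
  also have "\<dots> = (\<Sum>ys\<in>T m'. \<Sum>xs\<in>{xs \<in> T m. map f xs = ys}. v xs * A r m' (nth (map f xs)) g a)"
    unfolding sum_distrib_right by (intro sum.cong refl) auto
  also have "\<dots> = (\<Sum>xs\<in>T m. v xs * A r m' (nth (map f xs)) g a)"
    by (rule sum.group[OF finT finT mapT])
  also have "\<dots> = (\<Sum>xs\<in>T m. v xs * A m m' f (A r m (nth xs) g) a)"
    using comp by simp
  also have "\<dots> = A m m' f (yoneda_lift A r g m v) a"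
    unfolding yoneda_lift_def T_def
    using lin_on_sum[OF fa_module_lin[OF G f] fa_module_subsp[OF G] finT[unfolded T_def], where u="\<lambda>xs. A r m (nth xs) g" and c=v]
      fa_module_closed[OF G famap_nth g]
    by simp
  finally show "yoneda_lift A r g m' (PFA_act m m' f v) a = A m m' f (yoneda_lift A r g m v) a" .
qed

lemma fa_nat_yoneda_lift:
  assumes G: "fa_module G A" and g: "g \<in> G r"
  shows "fa_nat (PFA r) PFA_act G A (yoneda_lift A r g)"
  unfolding fa_nat_def
proof (intro conjI allI impI ballI)
  fix m
  show "lin_on (PFA r m) (yoneda_lift A r g m)"
    unfolding lin_on_def yoneda_lift_def by (auto simp: distrib_right sum.distrib sum_distrib_left mult.assoc)
  have fin: "finite (tuples {..<m} r)" by (simp add: finite_tuples)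
  have "yoneda_lift A r g m v \<in> G m" for v
    unfolding yoneda_lift_def
    using subsp_sum[OF fa_module_subsp[OF G] fin, where u="\<lambda>xs. A r m (nth xs) g" and c=v]
      fa_module_closed[OF G famap_nth g]
    by simp
  then show "yoneda_lift A r g m ` PFA r m \<subseteq> G m" by blast
qed (rule yoneda_lift_natural[OF G g])

lemma yoneda_lift_comp:
  assumes G: "fa_module G AG" and g: "g \<in> G r" and p: "fa_nat G AG H AH p"
  shows "p m (yoneda_lift AG r g m v) = yoneda_lift AH r (p r g) m v"
proof -
  have fin: "finite (tuples {..<m} r)" by (simp add: finite_tuples)
  show ?thesis
    unfolding yoneda_lift_def
    using lin_on_sum[OF fa_nat_lin[OF p] fa_module_subsp[OF G] fin, where u="\<lambda>xs. AG r m (nth xs) g" and c=v]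
      fa_module_closed[OF G famap_nth g] fa_nat_commute[OF p famap_nth g]
    by simp
qed

lemma yoneda_lift_unique:
  assumes \<phi>: "fa_nat (PFA r) PFA_act H AH \<phi>" and v: "v \<in> PFA r m"
  shows "\<phi> m v = yoneda_lift AH r (\<phi> r (basis_vec [0..<r])) m v"
proof -
  have e: "basis_vec [0..<r] \<in> PFA r r" by (rule basis_vec_PFA) (auto simp: tuples_def)
  have "\<phi> m (basis_vec xs) = AH r m (nth xs) (\<phi> r (basis_vec [0..<r]))" if "xs \<in> tuples {..<m} r" for xs
    using fa_nat_commute[OF \<phi> famap_nth[OF that] e] lpush_basis_vec[OF that] by (metis PFA_act_def)
  moreover have "\<phi> m v = (\<lambda>a. \<Sum>xs\<in>tuples {..<m} r. v xs * \<phi> m (basis_vec xs) a)"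
  proof -
    have "\<phi> m v = \<phi> m (\<lambda>z. \<Sum>xs\<in>tuples {..<m} r. v xs * basis_vec xs z)"
      using basis_vec_expansion[OF v] by simp
    also have "\<dots> = (\<lambda>a. \<Sum>xs\<in>tuples {..<m} r. v xs * \<phi> m (basis_vec xs) a)"
      by (rule lin_on_sum[OF fa_nat_lin[OF \<phi>] fa_module_subsp[OF fa_module_PFA] finite_tuples])
        (auto intro: basis_vec_PFA)
    finally show ?thesis .
  qed
  ultimately show ?thesis
    unfolding yoneda_lift_def by simp
qed

lemma fa_projective_PFA: "fa_projective TYPE('a) (PFA r :: (nat list, 'k::field) fa_obj) PFA_act"
  unfolding fa_projective_def
proof (intro allI impI)
  fix G H :: "('a,'k) fa_obj" and AG AH p \<phi>
  assume G: "fa_module G AG" and H: "fa_module H AH" and p: "fa_nat G AG H AH p"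
    and surj: "\<forall>m. p m ` G m = H m" and \<phi>: "fa_nat (PFA r) PFA_act H AH \<phi>"
  define e :: "nat list \<Rightarrow> 'k" where "e = basis_vec [0..<r]"
  have "\<phi> r e \<in> H r" unfolding e_def by (rule fa_nat_closed[OF \<phi> basis_vec_PFA]) (auto simp: tuples_def)
  then obtain g where g: "g \<in> G r" "p r g = \<phi> r e" using surj by (metis imageE)
  have "p m (yoneda_lift AG r g m v) = \<phi> m v" if "v \<in> PFA r m" for m v
    using yoneda_lift_comp[OF G g(1) p] yoneda_lift_unique[OF \<phi> that] g(2) by (simp add: e_def)
  then show "\<exists>\<psi>. fa_nat (PFA r) PFA_act G AG \<psi> \<and> (\<forall>m. \<forall>v\<in>PFA r m. p m (\<psi> m v) = \<phi> m v)"
    using fa_nat_yoneda_lift[OF G g(1)] by blast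
qed

section \<open>Reducing one tensor slot: \<open>P \<otimes> P \<cong> P \<otimes> (Pbar \<oplus> kbar)\<close>\<close>

text \<open>
  Elements of \<open>(P \<otimes> (P \<oplus> kbar)\<^sup>\<otimes>\<^sup>n)(m)\<close> are functions on lists in \<open>optset m\<close> of length
  \<open>n + 1\<close> with a \<open>Some\<close> head; these are the lists satisfying \<open>pk_index\<close>.
  \<open>reduce_slot\<close> rewrites slot \<open>i\<close> in the basis \<open>[x] - [x\<^sub>0]\<close>, \<open>1\<close>, where \<open>x\<^sub>0\<close> is the
  head: the \<open>None\<close> coefficient becomes the coefficient sum of the slot.  The
  module \<open>reduced_upto n j\<close> is \<open>P \<otimes> (Pbar \<oplus> kbar)\<^sup>\<otimes>\<^sup>j \<otimes> P\<^sup>\<otimes>\<^sup>(\<^sup>n\<^sup>-\<^sup>j\<^sup>)\<close>.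
\<close>

definition pk_index :: "nat \<Rightarrow> nat \<Rightarrow> nat option list \<Rightarrow> bool" where
  "pk_index n m z \<longleftrightarrow> z \<in> tuples (optset m) (Suc n) \<and> hd z \<noteq> None"

definition slot_sum :: "nat \<Rightarrow> nat \<Rightarrow> (nat option list \<Rightarrow> 'k::field) \<Rightarrow> nat option list \<Rightarrow> 'k" where
  "slot_sum m i \<Phi> z = (\<Sum>y<m. \<Phi> (z[i := Some y]))"

definition reduce_slot :: "nat \<Rightarrow> nat \<Rightarrow> nat \<Rightarrow> (nat option list \<Rightarrow> 'k::field) \<Rightarrow> nat option list \<Rightarrow> 'k" where
  "reduce_slot n i m \<Phi> z = (if pk_index n m z then (if z!i = None then slot_sum m i \<Phi> z
      else \<Phi> z - (if z!i = hd z then slot_sum m i \<Phi> z else 0)) else 0)"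

definition unreduce_slot :: "nat \<Rightarrow> nat \<Rightarrow> nat \<Rightarrow> (nat option list \<Rightarrow> 'k::field) \<Rightarrow> nat option list \<Rightarrow> 'k" where
  "unreduce_slot n i m \<Phi> z = (if pk_index n m z \<and> z!i \<noteq> None then \<Phi> z + (if z!i = hd z then \<Phi> (z[i:=None]) else 0) else 0)"

definition reduced_upto :: "nat \<Rightarrow> nat \<Rightarrow> nat \<Rightarrow> (nat option list \<Rightarrow> 'k::field) set" where
  "reduced_upto n j m = {\<Phi>. (\<forall>z. \<not> pk_index n m z \<longrightarrow> \<Phi> z = 0)
     \<and> (\<forall>i z. j < i \<longrightarrow> i \<le> n \<longrightarrow> pk_index n m z \<longrightarrow> z!i = None \<longrightarrow> \<Phi> z = 0)
     \<and> (\<forall>i z. 1 \<le> i \<longrightarrow> i \<le> j \<longrightarrow> slot_sum m i \<Phi> z = 0)}"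

lemma optset_simps[simp]: "None \<in> optset m" "Some x \<in> optset m \<longleftrightarrow> x < m"
  by (auto simp: optset_def)

lemma finite_optset[simp]: "finite (optset m)" by (simp add: optset_def)

lemma hd_list_update_nonzero: "i \<noteq> 0 \<Longrightarrow> hd (z[i:=a]) = hd z"
  by (cases z; cases i) auto

lemma pk_index_length: "pk_index n m z \<Longrightarrow> length z = Suc n"
  by (simp add: pk_index_def tuples_def)

lemma pk_index_update_swap:
  assumes "pk_index n m (z[i:=a])" "b \<in> optset m" "i \<noteq> 0"
  shows "pk_index n m (z[i:=b])"
proof -
  have "z[i:=b] \<in> tuples (optset m) (Suc n)"
    using assms(1,2) tuples_list_update_swap[of z i a "optset m" "Suc n" b] unfolding pk_index_def by blast
  moreover have "hd (z[i:=b]) = hd (z[i:=a])" using hd_list_update_nonzero[OF assms(3), of z b] hd_list_update_nonzero[OF assms(3), of z a] by simp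
  ultimately show ?thesis using assms(1) unfolding pk_index_def by simp
qed

lemma pk_index_update:
  assumes "pk_index n m z" "i \<noteq> 0" "b \<in> optset m" shows "pk_index n m (z[i:=b])"
proof -
  have "z[i := z!i] = z" by simp
  then show ?thesis using pk_index_update_swap[of n m z i "z!i" b] assms by simp
qed

lemma pk_index_hd: "pk_index n m z \<Longrightarrow> \<exists>a. hd z = Some a \<and> a < m"
proof -
  assume g: "pk_index n m z"
  then have "z \<noteq> []" by (auto simp: pk_index_def tuples_def)
  then have "hd z \<in> set z" by simp
  then have "hd z \<in> optset m" using g by (auto simp: pk_index_def tuples_def)
  then show ?thesis using g by (cases "hd z") (auto simp: pk_index_def)
qed

lemma slot_sum_update[simp]: "slot_sum m i \<Phi> (z[i:=a]) = slot_sum m i \<Phi> z"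
  by (simp add: slot_sum_def)

lemma slot_sum_commute:
  assumes "i \<noteq> i'"
  shows "slot_sum m i' (slot_sum m i \<Phi>) z = slot_sum m i (slot_sum m i' \<Phi>) z"
proof -
  have "slot_sum m i' (slot_sum m i \<Phi>) z = (\<Sum>y<m. \<Sum>x<m. \<Phi> ((z[i' := Some y])[i := Some x]))"
    by (simp add: slot_sum_def)
  also have "\<dots> = (\<Sum>x<m. \<Sum>y<m. \<Phi> ((z[i' := Some y])[i := Some x]))" by (rule sum.swap)
  also have "\<dots> = (\<Sum>x<m. \<Sum>y<m. \<Phi> ((z[i := Some x])[i' := Some y]))"
    by (simp only: list_update_swap[OF assms])
  also have "\<dots> = slot_sum m i (slot_sum m i' \<Phi>) z" by (simp add: slot_sum_def)
  finally show ?thesis .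
qed

lemma slot_sum_eq_0_all:
  assumes sup: "\<forall>z. \<not> pk_index n m z \<longrightarrow> \<Phi> z = 0" and i: "i \<noteq> 0"
    and c: "\<forall>xs\<in>tuples (optset m) (Suc n). slot_sum m i \<Phi> xs = 0"
  shows "slot_sum m i \<Phi> z = 0"
proof (cases "z[i:=None] \<in> tuples (optset m) (Suc n)")
  case True
  have "slot_sum m i \<Phi> z = slot_sum m i \<Phi> (z[i:=None])" by simp
  moreover have "slot_sum m i \<Phi> (z[i:=None]) = 0" using c True by blast
  ultimately show ?thesis by simp
next
  case False
  have "\<Phi> (z[i:=Some y]) = 0" if "y < m" for y
  proof -
    have "z[i:=Some y] \<notin> tuples (optset m) (Suc n)"
      using False tuples_list_update_swap[of z i "Some y" "optset m" "Suc n" None] by auto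
    then show ?thesis using sup by (simp add: pk_index_def)
  qed
  then show ?thesis by (simp add: slot_sum_def)
qed

lemma reduced_upto_top: "reduced_upto n n m = (PPbarKbar n m :: (nat option list \<Rightarrow> 'k::field) set)"
proof (intro set_eqI iffI)
  fix \<Phi> :: "nat option list \<Rightarrow> 'k::field" assume "\<Phi> \<in> reduced_upto n n m"
  then show "\<Phi> \<in> PPbarKbar n m" unfolding reduced_upto_def PPbarKbar_def by (auto simp: pk_index_def slot_sum_def)
next
  fix \<Phi> :: "nat option list \<Rightarrow> 'k::field" assume a: "\<Phi> \<in> PPbarKbar n m"
  have sup: "\<forall>z. \<not> pk_index n m z \<longrightarrow> \<Phi> z = 0" using a by (auto simp: PPbarKbar_def pk_index_def)
  have "slot_sum m i \<Phi> z = 0" if "1 \<le> i" "i \<le> n" for i z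
    using slot_sum_eq_0_all[OF sup, of i z] a that by (auto simp: PPbarKbar_def slot_sum_def)
  then show "\<Phi> \<in> reduced_upto n n m" using sup unfolding reduced_upto_def by auto
qed

lemma reduced_upto_off_index: "\<Phi> \<in> reduced_upto n j m \<Longrightarrow> \<not> pk_index n m z \<Longrightarrow> \<Phi> z = 0"
  by (simp add: reduced_upto_def)

lemma reduced_upto_None: "\<Phi> \<in> reduced_upto n j m \<Longrightarrow> j < i \<Longrightarrow> i \<le> n \<Longrightarrow> z!i = None \<Longrightarrow> \<Phi> z = 0"
  unfolding reduced_upto_def by (cases "pk_index n m z") auto

lemma reduced_upto_slot_sum: "\<Phi> \<in> reduced_upto n j m \<Longrightarrow> 1 \<le> i \<Longrightarrow> i \<le> j \<Longrightarrow> slot_sum m i \<Phi> z = 0"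
  by (simp add: reduced_upto_def)

lemma slot_sum_off_index:
  assumes "\<not> pk_index n m (z[i:=None])" "i \<noteq> 0" "\<forall>w. \<not> pk_index n m w \<longrightarrow> \<Psi> w = 0"
  shows "slot_sum m i \<Psi> z = 0"
proof -
  have "\<Psi> (z[i:=Some y]) = 0" if "y < m" for y
    using assms pk_index_update_swap[of n m z i "Some y" None] by auto
  then show ?thesis by (simp add: slot_sum_def)
qed

lemma slot_sum_eq_0I:
  assumes "\<And>y. y < m \<Longrightarrow> \<Psi> (z[i:=Some y]) = 0" shows "slot_sum m i \<Psi> z = 0"
  using assms by (simp add: slot_sum_def)

lemma pk_index_slot_lt: "pk_index n m z \<Longrightarrow> i \<le> n \<Longrightarrow> i < length z"
  using pk_index_length by fastforce

lemma reduce_slot_off_index: "\<not> pk_index n m z \<Longrightarrow> reduce_slot n i m \<Phi> z = 0"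
  by (simp add: reduce_slot_def)

lemma unreduce_slot_off_index: "\<not> pk_index n m z \<Longrightarrow> unreduce_slot n i m \<Phi> z = 0"
  by (simp add: unreduce_slot_def)

lemma slot_sum_reduce_slot_same:
  assumes g: "pk_index n m (z[i:=None])" and i: "1 \<le> i" "i \<le> n"
  shows "slot_sum m i (reduce_slot n i m \<Phi>) z = 0"
proof -
  have gy: "pk_index n m (z[i:=Some y])" if "y < m" for y
    using pk_index_update_swap[OF g, of "Some y"] that i by simp
  obtain a where a: "hd z = Some a" "a < m" using pk_index_hd[OF g] hd_list_update_nonzero[of i z None] i by auto
  have il: "i < length z" using pk_index_length[OF g] i by simp
  have "reduce_slot n i m \<Phi> (z[i:=Some y]) = \<Phi> (z[i:=Some y]) - (if y = a then slot_sum m i \<Phi> z else 0)"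
    if "y < m" for y
    using gy[OF that] il a(1) hd_list_update_nonzero[of i z "Some y"] i unfolding reduce_slot_def by simp
  then have "slot_sum m i (reduce_slot n i m \<Phi>) z
      = (\<Sum>y<m. \<Phi> (z[i:=Some y]) - (if y = a then slot_sum m i \<Phi> z else 0))"
    unfolding slot_sum_def by simp
  also have "\<dots> = 0" using a(2) by (simp add: slot_sum_def sum_subtractf)
  finally show ?thesis .
qed

lemma slot_sum_reduce_slot_other:
  fixes \<Phi> :: "nat option list \<Rightarrow> 'k::field"
  assumes g: "pk_index n m (z[i':=None])" and i': "1 \<le> i'" "i' \<noteq> i"
    and \<Phi>: "\<And>w. slot_sum m i' \<Phi> w = 0"
  shows "slot_sum m i' (reduce_slot n i m \<Phi>) z = 0"
proof -
  have gy: "pk_index n m (z[i':=Some y])" if "y < m" for y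
    using pk_index_update_swap[OF g, of "Some y"] that i' by simp
  have zi: "(z[i':=Some y])!i = z!i" for y using i' by simp
  have hz: "hd (z[i':=Some y]) = hd z" for y using hd_list_update_nonzero[of i'] i' by simp
  have "slot_sum m i (slot_sum m i' \<Phi>) z = 0" by (rule slot_sum_eq_0I) (rule \<Phi>)
  then have iterated: "slot_sum m i' (slot_sum m i \<Phi>) z = 0"
    using slot_sum_commute[of i i' m \<Phi> z] i'(2) by simp
  show ?thesis
  proof (cases "z!i = None")
    case True
    then have "reduce_slot n i m \<Phi> (z[i':=Some y]) = slot_sum m i \<Phi> (z[i':=Some y])" if "y < m" for y
      using gy[OF that] zi unfolding reduce_slot_def by simp
    then show ?thesis using iterated by (simp add: slot_sum_def)
  next
    case False
    then obtain b where zb: "z!i = Some b" by auto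
    define c where "c = (if z!i = hd z then (1::'k) else 0)"
    have "reduce_slot n i m \<Phi> (z[i':=Some y]) = \<Phi> (z[i':=Some y]) - c * slot_sum m i \<Phi> (z[i':=Some y])"
      if "y < m" for y
      using gy[OF that] zi zb hz[of y] unfolding reduce_slot_def c_def by simp
    then have "slot_sum m i' (reduce_slot n i m \<Phi>) z = slot_sum m i' \<Phi> z - c * slot_sum m i' (slot_sum m i \<Phi>) z"
      unfolding slot_sum_def by (simp add: sum_subtractf sum_distrib_left)
    then show ?thesis using \<Phi> iterated by simp
  qed
qed

lemma reduce_slot_mem:
  assumes V: "\<Phi> \<in> reduced_upto n j m" and jn: "Suc j \<le> n"
  shows "reduce_slot n (Suc j) m \<Phi> \<in> reduced_upto n (Suc j) m"
proof -
  let ?\<Psi> = "reduce_slot n (Suc j) m \<Phi>"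
  have None: "?\<Psi> z = 0" if "Suc j < i'" "i' \<le> n" "z!i' = None" for i' z
  proof -
    have "\<Phi> z = 0" using reduced_upto_None[OF V _ that(2,3)] that(1) by simp
    moreover have "slot_sum m (Suc j) \<Phi> z = 0"
      by (rule slot_sum_eq_0I, rule reduced_upto_None[OF V _ that(2)]) (use that in auto)
    ultimately show ?thesis unfolding reduce_slot_def by simp
  qed
  have sums: "slot_sum m i' ?\<Psi> z = 0" if i': "1 \<le> i'" "i' \<le> Suc j" for i' z
  proof (cases "pk_index n m (z[i':=None])")
    case False then show ?thesis
      by (rule slot_sum_off_index) (use i' reduce_slot_off_index in auto)
  next
    case True
    show ?thesis
    proof (cases "i' = Suc j")
      case True
      then show ?thesis using slot_sum_reduce_slot_same[of n m z i'] \<open>pk_index n m (z[i':=None])\<close> i' jn by simp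
    next
      case False
      then have "i' \<le> j" using i' by simp
      then show ?thesis
        using slot_sum_reduce_slot_other[OF True i'(1) False] reduced_upto_slot_sum[OF V i'(1)] by blast
    qed
  qed
  show ?thesis unfolding reduced_upto_def using reduce_slot_off_index None sums by auto
qed

lemma slot_sum_unreduce_slot:
  assumes g: "pk_index n m z" and i: "1 \<le> i" "i \<le> n"
  shows "slot_sum m i (unreduce_slot n i m \<Phi>) z = slot_sum m i \<Phi> z + \<Phi> (z[i:=None])"
proof -
  obtain a where a: "hd z = Some a" "a < m" using pk_index_hd[OF g] by auto
  have ilt: "i < length z" using pk_index_slot_lt[OF g i(2)] .
  have "unreduce_slot n i m \<Phi> (z[i:=Some y]) = \<Phi> (z[i:=Some y]) + (if y = a then \<Phi> (z[i:=None]) else 0)"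
    if "y < m" for y
    using pk_index_update[OF g _, of i "Some y"] that i ilt hd_list_update_nonzero[of i z "Some y"] a(1)
    unfolding unreduce_slot_def by simp
  then have "slot_sum m i (unreduce_slot n i m \<Phi>) z = (\<Sum>y<m. \<Phi> (z[i:=Some y]) + (if y = a then \<Phi> (z[i:=None]) else 0))"
    unfolding slot_sum_def by simp
  also have "\<dots> = slot_sum m i \<Phi> z + \<Phi> (z[i:=None])" using a(2) by (simp add: slot_sum_def sum.distrib)
  finally show ?thesis .
qed

lemma unreduce_slot_mem:
  fixes \<Phi> :: "nat option list \<Rightarrow> 'k::field"
  assumes V: "\<Phi> \<in> reduced_upto n (Suc j) m" and jn: "Suc j \<le> n"
  shows "unreduce_slot n (Suc j) m \<Phi> \<in> reduced_upto n j m"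
proof -
  define i where "i = Suc j"
  define \<Theta> where "\<Theta> = unreduce_slot n i m \<Phi>"
  have sup: "\<forall>z. \<not> pk_index n m z \<longrightarrow> \<Theta> z = 0" by (simp add: \<Theta>_def unreduce_slot_off_index)
  have b: "\<Theta> z = 0" if i1: "j < i'" and i2: "i' \<le> n" and gz: "pk_index n m z" and zn: "z!i' = None" for i' z
  proof (cases "i' = i")
    case True then show ?thesis using zn unfolding \<Theta>_def unreduce_slot_def by simp
  next
    case False
    then have ii: "Suc j < i'" using i1 i_def by simp
    have 1: "\<Phi> z = 0" using reduced_upto_None[OF V ii i2 zn] .
    have 2: "\<Phi> (z[i:=None]) = 0" using reduced_upto_None[OF V ii i2] zn False by simp
    show ?thesis unfolding \<Theta>_def unreduce_slot_def using 1 2 by simp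
  qed
  have c: "slot_sum m i' \<Theta> z = 0" if i1: "1 \<le> i'" and i2: "i' \<le> j" for i' z
  proof (cases "pk_index n m (z[i':=None])")
    case False then show ?thesis using slot_sum_off_index[OF False _ sup] i1 by simp
  next
    case True
    have gy: "pk_index n m (z[i':=Some y])" if "y < m" for y
      using pk_index_update_swap[OF True, of "Some y"] that i1 by simp
    have hz: "hd (z[i':=Some y]) = hd z" for y using hd_list_update_nonzero[of i'] i1 by simp
    have ii: "i' \<noteq> i" using i2 i_def by simp
    have zi: "(z[i':=Some y])!i = z!i" for y using ii by simp
    have sw: "(z[i':=Some y])[i:=None] = (z[i:=None])[i':=Some y]" for y
      using list_update_swap[OF ii] by metis
    define c where "c = (if z!i = hd z then (1::'k) else 0)"
    define d where "d = (if z!i \<noteq> None then (1::'k) else 0)"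
    have "\<Theta> (z[i':=Some y]) = d * (\<Phi> (z[i':=Some y]) + c * \<Phi> ((z[i:=None])[i':=Some y]))" if "y < m" for y
      using gy[OF that] zi hz[of y] sw[of y] unfolding \<Theta>_def unreduce_slot_def c_def d_def by simp
    then have "slot_sum m i' \<Theta> z = d * (slot_sum m i' \<Phi> z + c * slot_sum m i' \<Phi> (z[i:=None]))"
      unfolding slot_sum_def by (simp add: distrib_left sum.distrib sum_distrib_left)
    moreover have "slot_sum m i' \<Phi> w = 0" for w using reduced_upto_slot_sum[OF V i1] i2 by simp
    ultimately show ?thesis by simp
  qed
  show ?thesis unfolding reduced_upto_def using sup b c i_def \<Theta>_def by auto
qed

lemma unreduce_reduce_slot:
  fixes \<Phi> :: "nat option list \<Rightarrow> 'k::field"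
  assumes V: "\<Phi> \<in> reduced_upto n j m" and jn: "Suc j \<le> n"
  shows "unreduce_slot n (Suc j) m (reduce_slot n (Suc j) m \<Phi>) = \<Phi>"
proof
  fix z
  define i where "i = Suc j"
  show "unreduce_slot n (Suc j) m (reduce_slot n (Suc j) m \<Phi>) z = \<Phi> z"
  proof (cases "pk_index n m z")
    case False then show ?thesis using reduced_upto_off_index[OF V False] by (simp add: unreduce_slot_def)
  next
    case g: True
    show ?thesis
    proof (cases "z!i = None")
      case True
      then show ?thesis using reduced_upto_None[OF V _ _ True] jn i_def by (simp add: unreduce_slot_def)
    next
      case False
      then obtain b where zb: "z!i = Some b" by auto
      have ilt: "i < length z" using pk_index_slot_lt[OF g] jn i_def by simp
      have g2: "pk_index n m (z[i:=None])" using pk_index_update[OF g, of i None] i_def by simp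
      have t2: "reduce_slot n i m \<Phi> (z[i:=None]) = slot_sum m i \<Phi> z" using g2 ilt by (simp add: reduce_slot_def)
      show ?thesis using g zb t2 unfolding i_def[symmetric] by (simp add: unreduce_slot_def reduce_slot_def)
    qed
  qed
qed

lemma reduce_unreduce_slot:
  fixes \<Phi> :: "nat option list \<Rightarrow> 'k::field"
  assumes V: "\<Phi> \<in> reduced_upto n (Suc j) m" and jn: "Suc j \<le> n"
  shows "reduce_slot n (Suc j) m (unreduce_slot n (Suc j) m \<Phi>) = \<Phi>"
proof
  fix z
  define i where "i = Suc j"
  show "reduce_slot n (Suc j) m (unreduce_slot n (Suc j) m \<Phi>) z = \<Phi> z"
  proof (cases "pk_index n m z")
    case False then show ?thesis using reduced_upto_off_index[OF V False] by (simp add: reduce_slot_def)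
  next
    case g: True
    have ps: "slot_sum m i (unreduce_slot n i m \<Phi>) z = slot_sum m i \<Phi> z + \<Phi> (z[i:=None])"
      using slot_sum_unreduce_slot[OF g, of i] jn i_def by simp
    have p0: "slot_sum m i \<Phi> z = 0" using reduced_upto_slot_sum[OF V, of i] i_def by simp
    show ?thesis
    proof (cases "z!i = None")
      case True
      then have "z[i:=None] = z" by (metis list_update_id)
      then show ?thesis using g True ps p0 unfolding i_def[symmetric] by (simp add: reduce_slot_def)
    next
      case False
      then obtain b where zb: "z!i = Some b" by auto
      show ?thesis using g zb ps p0 unfolding i_def[symmetric] by (simp add: reduce_slot_def unreduce_slot_def)
    qed
  qed
qed

lemma slot_sum_add: "slot_sum m i (\<lambda>z. u z + v z) = (\<lambda>z. slot_sum m i u z + slot_sum m i v z)"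
  by (simp add: slot_sum_def sum.distrib fun_eq_iff)
lemma slot_sum_smult: "slot_sum m i (\<lambda>z. c * u z) = (\<lambda>z. c * slot_sum m i u z)"
  by (simp add: slot_sum_def sum_distrib_left fun_eq_iff)

lemma lin_on_reduce_slot: "lin_on V (reduce_slot n i m)"
  unfolding lin_on_def reduce_slot_def by (simp add: slot_sum_add slot_sum_smult fun_eq_iff algebra_simps)

section \<open>Naturality of slot reduction\<close>

definition fibre :: "nat \<Rightarrow> (nat \<Rightarrow> nat) \<Rightarrow> nat option list \<Rightarrow> nat option list set" where
  "fibre m f z = {w \<in> tuples (optset m) (length z). map (map_option f) w = z}"

definition slot_fibre :: "nat \<Rightarrow> (nat \<Rightarrow> nat) \<Rightarrow> nat \<Rightarrow> nat option list \<Rightarrow> nat option list set" where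
  "slot_fibre m f i z = {w \<in> tuples (optset m) (length z). w!i \<noteq> None \<and> (\<forall>k<length z. k \<noteq> i \<longrightarrow> map_option f (w!k) = z!k)}"

lemma finite_fibre: "finite (fibre m f z)"
  unfolding fibre_def by (rule finite_subset[OF _ finite_tuples[OF finite_optset, of m "length z"]]) auto

lemma finite_slot_fibre: "finite (slot_fibre m f i z)"
  unfolding slot_fibre_def by (rule finite_subset[OF _ finite_tuples[OF finite_optset, of m "length z"]]) auto

lemma lpush_option_fibre: "lpush (optset m) (map_option f) \<Phi> z = (\<Sum>w\<in>fibre m f z. \<Phi> w)"
  by (simp add: lpush_def fibre_def)

lemma mem_fibre: "w \<in> fibre m f z \<longleftrightarrow> length w = length z \<and> (\<forall>k<length z. w!k \<in> optset m \<and> map_option f (w!k) = z!k)"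
  unfolding fibre_def mem_tuples_nth list_eq_iff_nth_eq by auto

lemma mem_slot_fibre: "w \<in> slot_fibre m f i z \<longleftrightarrow> length w = length z \<and> (\<forall>k<length z. w!k \<in> optset m) \<and> w!i \<noteq> None
    \<and> (\<forall>k<length z. k \<noteq> i \<longrightarrow> map_option f (w!k) = z!k)"
  unfolding slot_fibre_def mem_tuples_nth by auto

lemma sum_slot_fibre_by_value:
  assumes f: "famap m m' f" and i: "i < length z"
  shows "(\<Sum>y<m'. \<Sum>w\<in>fibre m f (z[i:=Some y]). \<Phi> w) = (\<Sum>w\<in>slot_fibre m f i z. \<Phi> w)"
proof -
  define h where "h w = the (map_option f (w!i))" for w
  have img: "h ` slot_fibre m f i z \<subseteq> {..<m'}"
  proof
    fix y assume "y \<in> h ` slot_fibre m f i z"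
    then obtain w where w: "w \<in> slot_fibre m f i z" "y = h w" by blast
    then obtain x where x: "w!i = Some x" using mem_slot_fibre by blast
    have "w!i \<in> optset m" using w(1) i by (simp add: mem_slot_fibre)
    then have "x < m" using x by simp
    then show "y \<in> {..<m'}" using f w(2) x by (simp add: h_def famap_def)
  qed
  have eq: "{w. w \<in> slot_fibre m f i z \<and> h w = y} = fibre m f (z[i:=Some y])" for y
  proof (intro set_eqI iffI)
    fix w assume a: "w \<in> {w. w \<in> slot_fibre m f i z \<and> h w = y}"
    then have r: "w \<in> slot_fibre m f i z" and hy: "h w = y" by auto
    then obtain x where x: "w!i = Some x" using mem_slot_fibre by blast
    show "w \<in> fibre m f (z[i:=Some y])"
      unfolding mem_fibre using r x hy i by (auto simp: mem_slot_fibre h_def nth_list_update)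
  next
    fix w assume a: "w \<in> fibre m f (z[i:=Some y])"
    then have l: "length w = length z" and k: "\<And>k. k < length z \<Longrightarrow> w!k \<in> optset m \<and> map_option f (w!k) = (z[i:=Some y])!k"
      by (auto simp: mem_fibre)
    have wi: "map_option f (w!i) = Some y" using k[OF i] i by simp
    then have "w!i \<noteq> None" by auto
    moreover have "h w = y" unfolding h_def by (simp only: wi option.sel)
    moreover have "\<forall>k<length z. k \<noteq> i \<longrightarrow> map_option f (w!k) = z!k" using k by simp
    ultimately show "w \<in> {w. w \<in> slot_fibre m f i z \<and> h w = y}" using l k by (simp add: mem_slot_fibre)
  qed
  have "(\<Sum>w\<in>slot_fibre m f i z. \<Phi> w) = (\<Sum>y<m'. \<Sum>w\<in>{w. w \<in> slot_fibre m f i z \<and> h w = y}. \<Phi> w)"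
    using sum.group[OF finite_slot_fibre finite_lessThan img, of \<Phi>] by simp
  also have "\<dots> = (\<Sum>y<m'. \<Sum>w\<in>fibre m f (z[i:=Some y]). \<Phi> w)" using eq by simp
  finally show ?thesis by simp
qed

text \<open>
  Summing over the values of slot \<open>i\<close> re-parametrises \<open>B\<close> by \<open>A \<times> {..<m}\<close>, where \<open>\<rho>\<close>
  gives the value slot \<open>i\<close> is reset to.
\<close>

lemma sum_fill_slot:
  assumes A: "finite A" and i: "\<And>w. w \<in> A \<Longrightarrow> i < length w"
    and reset: "\<And>w. w \<in> A \<Longrightarrow> w!i = \<rho> w"
    and fill: "\<And>w y. w \<in> A \<Longrightarrow> y < m \<Longrightarrow> w[i:=Some y] \<in> B \<and> \<rho> (w[i:=Some y]) = \<rho> w"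
    and restore: "\<And>r. r \<in> B \<Longrightarrow> r[i:=\<rho> r] \<in> A \<and> (\<exists>y<m. r!i = Some y)"
  shows "(\<Sum>w\<in>A. \<Sum>y<m. \<Phi> (w[i:=Some y])) = (\<Sum>w\<in>B. \<Phi> w)"
proof -
  have reset_id: "w[i:=\<rho> w] = w" if "w \<in> A" for w
    using reset[OF that] by (metis list_update_id)
  have "bij_betw (\<lambda>(w,y). w[i:=Some y]) (A \<times> {..<m}) B"
  proof (rule bij_betw_byWitness[where f'="\<lambda>r. (r[i:=\<rho> r], the (r!i))"])
    show "\<forall>a\<in>A \<times> {..<m}. (\<lambda>r. (r[i:=\<rho> r], the (r!i))) ((\<lambda>(w,y). w[i:=Some y]) a) = a"
    proof
      fix a assume "a \<in> A \<times> {..<m}"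
      then obtain w y where a: "a = (w,y)" "w \<in> A" "y < m" by blast
      have "(w[i:=Some y])[i:=\<rho> (w[i:=Some y])] = w" using fill[OF a(2,3)] reset_id[OF a(2)] by simp
      then show "(\<lambda>r. (r[i:=\<rho> r], the (r!i))) ((\<lambda>(w,y). w[i:=Some y]) a) = a"
        using a i[OF a(2)] by simp
    qed
    show "\<forall>r\<in>B. (\<lambda>(w,y). w[i:=Some y]) ((\<lambda>r. (r[i:=\<rho> r], the (r!i))) r) = r"
    proof
      fix r assume "r \<in> B"
      then obtain y where y: "r!i = Some y" using restore by blast
      then have "r[i:=Some y] = r" by (metis list_update_id)
      then show "(\<lambda>(w,y). w[i:=Some y]) ((\<lambda>r. (r[i:=\<rho> r], the (r!i))) r) = r"
        using y by simp
    qed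
    show "(\<lambda>(w,y). w[i:=Some y]) ` (A \<times> {..<m}) \<subseteq> B" using fill by auto
    show "(\<lambda>r. (r[i:=\<rho> r], the (r!i))) ` B \<subseteq> A \<times> {..<m}"
    proof
      fix p assume "p \<in> (\<lambda>r. (r[i:=\<rho> r], the (r!i))) ` B"
      then obtain r where r: "r \<in> B" "p = (r[i:=\<rho> r], the (r!i))" by blast
      with restore obtain y where "y < m" "r!i = Some y" by blast
      then show "p \<in> A \<times> {..<m}" using restore[OF r(1)] r(2) by simp
    qed
  qed
  then have "(\<Sum>p\<in>A \<times> {..<m}. \<Phi> ((\<lambda>(w,y). w[i:=Some y]) p)) = (\<Sum>w\<in>B. \<Phi> w)"
    by (rule sum.reindex_bij_betw)
  then show ?thesis by (simp add: sum.cartesian_product split_def)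
qed

lemma sum_fibre_None_slot:
  assumes zi: "z!i = None" and i: "i < length z"
  shows "(\<Sum>w\<in>fibre m f z. \<Sum>y<m. \<Phi> (w[i:=Some y])) = (\<Sum>w\<in>slot_fibre m f i z. \<Phi> w)"
  by (rule sum_fill_slot[OF finite_fibre, where \<rho>="\<lambda>_. None"])
    (use zi i in \<open>auto simp: mem_fibre mem_slot_fibre nth_list_update\<close>)

lemma sum_fibre_base_slot:
  assumes zi: "z!i = hd z" and i: "i < length z" "i \<noteq> 0"
  shows "(\<Sum>w\<in>{w \<in> fibre m f z. w!i = hd w}. \<Sum>y<m. \<Phi> (w[i:=Some y])) = (\<Sum>w\<in>slot_fibre m f i z. \<Phi> w)"
proof (rule sum_fill_slot[where \<rho>=hd])
  show "finite {w \<in> fibre m f z. w!i = hd w}" using finite_fibre by simp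
  have z0: "0 < length z" using i(1) by arith
  fix r assume r: "r \<in> slot_fibre m f i z"
  have "r \<noteq> []" using r z0 by (auto simp: mem_slot_fibre)
  then have "r[i:=hd r] \<in> fibre m f z"
    using r zi z0 i hd_conv_nth[of r] hd_conv_nth[of z] by (auto simp: mem_fibre mem_slot_fibre nth_list_update)
  moreover have "(r[i:=hd r])!i = hd (r[i:=hd r])"
    using hd_list_update_nonzero[OF i(2), of r "hd r"] r i by (simp add: mem_slot_fibre)
  ultimately show "r[i:=hd r] \<in> {w \<in> fibre m f z. w!i = hd w} \<and> (\<exists>y<m. r!i = Some y)"
    using r i by (auto simp: mem_slot_fibre)
qed (use i hd_list_update_nonzero in \<open>auto simp: mem_fibre mem_slot_fibre nth_list_update\<close>)

lemma map_option_optset: "famap m m' f \<Longrightarrow> a \<in> optset m \<Longrightarrow> map_option f a \<in> optset m'"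
  by (cases a) (auto simp: famap_def)

lemma fibre_length: "w \<in> fibre m f z \<Longrightarrow> length w = length z" by (simp add: mem_fibre)
lemma fibre_nth: "w \<in> fibre m f z \<Longrightarrow> k < length z \<Longrightarrow> map_option f (w!k) = z!k \<and> w!k \<in> optset m"
  by (simp add: mem_fibre)

lemma fibre_hd: assumes "w \<in> fibre m f z" "z \<noteq> []" shows "map_option f (hd w) = hd z"
proof -
  have wne: "w \<noteq> []" using fibre_length[OF assms(1)] assms(2) by auto
  have "map_option f (w!0) = z!0" using fibre_nth[OF assms(1), of 0] assms(2) by simp
  then show ?thesis using hd_conv_nth[OF wne] hd_conv_nth[OF assms(2)] by simp
qed

lemma pk_index_fibre: assumes "w \<in> fibre m f z" "pk_index n m' z" shows "pk_index n m w"
proof -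
  have lz: "length z = Suc n" using pk_index_length[OF assms(2)] .
  have "w \<in> tuples (optset m) (Suc n)" using assms(1) lz by (auto simp: mem_fibre mem_tuples_nth)
  moreover have "hd w \<noteq> None"
  proof
    assume "hd w = None"
    moreover have "z \<noteq> []" using lz by auto
    ultimately have "hd z = None" using fibre_hd[OF assms(1)] by simp
    then show False using assms(2) by (simp add: pk_index_def)
  qed
  ultimately show ?thesis by (simp add: pk_index_def)
qed

lemma pk_index_image: assumes f: "famap m m' f" and w: "w \<in> fibre m f z" "pk_index n m w" shows "pk_index n m' z"
proof -
  have l: "length z = Suc n" using fibre_length[OF w(1)] pk_index_length[OF w(2)] by simp
  have "z!k \<in> optset m'" if "k < length z" for k
    using fibre_nth[OF w(1) that] map_option_optset[OF f] by metis
  then have "z \<in> tuples (optset m') (Suc n)" using l by (simp add: mem_tuples_nth)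
  moreover have "hd z \<noteq> None"
  proof
    assume "hd z = None"
    moreover have "z \<noteq> []" using l by auto
    ultimately have "map_option f (hd w) = None" using fibre_hd[OF w(1)] by simp
    then show False using w(2) by (simp add: pk_index_def)
  qed
  ultimately show ?thesis by (simp add: pk_index_def)
qed

lemma sum_fibre_base_slot_if:
  assumes i: "i < length z" "i \<noteq> 0"
  shows "(\<Sum>w\<in>fibre m f z. if w!i = hd w then slot_sum m i \<Phi> w else 0)
    = (if z!i = hd z then (\<Sum>w\<in>slot_fibre m f i z. \<Phi> w) else 0)"
proof -
  have "(\<Sum>w\<in>fibre m f z. if w!i = hd w then slot_sum m i \<Phi> w else 0)
      = (\<Sum>w\<in>{w \<in> fibre m f z. w!i = hd w}. \<Sum>y<m. \<Phi> (w[i:=Some y]))"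
    unfolding slot_sum_def by (rule sum.inter_filter[OF finite_fibre, symmetric])
  also have "\<dots> = (if z!i = hd z then (\<Sum>w\<in>slot_fibre m f i z. \<Phi> w) else 0)"
  proof (cases "z!i = hd z")
    case True then show ?thesis using sum_fibre_base_slot[OF True i] by simp
  next
    case False
    have "z!i = hd z" if w: "w \<in> fibre m f z" "w!i = hd w" for w
    proof -
      have "z!i = map_option f (w!i)" using fibre_nth[OF w(1) i(1)] by simp
      also have "\<dots> = hd z" using w(2) fibre_hd[OF w(1)] i(1) by (metis length_greater_0_conv not_less0 length_0_conv)
      finally show ?thesis .
    qed
    then have "{w \<in> fibre m f z. w!i = hd w} = {}" using False by blast
    then show ?thesis using False by (simp only: sum.empty if_False)
  qed
  finally show ?thesis .
qed

lemma reduce_slot_natural: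
  fixes \<Phi> :: "nat option list \<Rightarrow> 'k::field"
  assumes f: "famap m m' f" and supp: "\<forall>z. \<not> pk_index n m z \<longrightarrow> \<Phi> z = 0" and i: "1 \<le> i" "i \<le> n"
  shows "reduce_slot n i m' (lpush (optset m) (map_option f) \<Phi>) = lpush (optset m) (map_option f) (reduce_slot n i m \<Phi>)"
proof
  fix z
  let ?L = "lpush (optset m) (map_option f) \<Phi>"
  have R: "lpush (optset m) (map_option f) (reduce_slot n i m \<Phi>) z = (\<Sum>w\<in>fibre m f z. reduce_slot n i m \<Phi> w)"
    by (rule lpush_option_fibre)
  show "reduce_slot n i m' ?L z = lpush (optset m) (map_option f) (reduce_slot n i m \<Phi>) z"
  proof (cases "pk_index n m' z")
    case False
    have "reduce_slot n i m \<Phi> w = 0" if "w \<in> fibre m f z" for w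
      using pk_index_image[OF f that] False reduce_slot_off_index by blast
    then show ?thesis using False R by (simp add: reduce_slot_def)
  next
    case g: True
    have ilt: "i < length z" using pk_index_length[OF g] i by simp
    have gw: "pk_index n m w" if "w \<in> fibre m f z" for w using pk_index_fibre[OF that g] .
    have slot_sum_L: "slot_sum m' i ?L z = (\<Sum>w\<in>slot_fibre m f i z. \<Phi> w)"
      unfolding slot_sum_def lpush_option_fibre by (rule sum_slot_fibre_by_value[OF f ilt])
    show ?thesis
    proof (cases "z!i = None")
      case True
      have "reduce_slot n i m \<Phi> w = slot_sum m i \<Phi> w" if "w \<in> fibre m f z" for w
        using fibre_nth[OF that ilt] True gw[OF that] by (simp add: reduce_slot_def)
      then have "lpush (optset m) (map_option f) (reduce_slot n i m \<Phi>) z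
          = (\<Sum>w\<in>fibre m f z. \<Sum>y<m. \<Phi> (w[i:=Some y]))"
        using R by (simp add: slot_sum_def)
      also have "\<dots> = (\<Sum>w\<in>slot_fibre m f i z. \<Phi> w)" by (rule sum_fibre_None_slot[OF True ilt])
      finally show ?thesis using g True slot_sum_L by (simp add: reduce_slot_def)
    next
      case False
      have "reduce_slot n i m \<Phi> w = \<Phi> w - (if w!i = hd w then slot_sum m i \<Phi> w else 0)"
        if "w \<in> fibre m f z" for w
        using fibre_nth[OF that ilt] False gw[OF that] by (auto simp: reduce_slot_def)
      then have "lpush (optset m) (map_option f) (reduce_slot n i m \<Phi>) z
          = ?L z - (if z!i = hd z then (\<Sum>w\<in>slot_fibre m f i z. \<Phi> w) else 0)"
        using R sum_fibre_base_slot_if[OF ilt, where m=m and f=f and \<Phi>=\<Phi>] i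
        by (simp add: sum_subtractf lpush_option_fibre)
      moreover obtain b where "z!i = Some b" using False by auto
      ultimately show ?thesis using g slot_sum_L by (simp add: reduce_slot_def)
    qed
  qed
qed

section \<open>\<open>P\<^sub>n\<^sub>+\<^sub>1 \<cong> P \<otimes> (Pbar \<oplus> kbar)\<^sup>\<otimes>\<^sup>n\<close>\<close>

definition extend_Some :: "(nat list \<Rightarrow> 'k::field) \<Rightarrow> nat option list \<Rightarrow> 'k" where
  "extend_Some v z = (if None \<in> set z then 0 else v (map the z))"

definition restrict_Some :: "(nat option list \<Rightarrow> 'k::field) \<Rightarrow> nat list \<Rightarrow> 'k" where
  "restrict_Some \<Phi> xs = \<Phi> (map Some xs)"

lemma map_Some_the: "None \<notin> set z \<Longrightarrow> map Some (map the z) = z"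
  by (induct z) auto

lemma map_Some_tuples: "map Some xs \<in> tuples (optset m) r \<longleftrightarrow> xs \<in> tuples {..<m} r"
  by (auto simp: tuples_def)

lemma fibre_map_Some: "fibre m f (map Some ys) = map Some ` {xs \<in> tuples {..<m} (length ys). map f xs = ys}"
proof (intro set_eqI iffI)
  fix w assume w: "w \<in> fibre m f (map Some ys)"
  then have mw: "map (map_option f) w = map Some ys" and wt: "w \<in> tuples (optset m) (length ys)"
    by (auto simp: fibre_def)
  have nN: "None \<notin> set w"
  proof
    assume "None \<in> set w"
    then have "map_option f None \<in> set (map (map_option f) w)" by (metis image_eqI list.set_map)
    then show False using mw by auto
  qed
  define xs where "xs = map the w"
  have wx: "w = map Some xs" using map_Some_the[OF nN] xs_def by simp
  have "map (map_option f) (map Some xs) = map Some (map f xs)" by (induct xs) auto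
  then have "map Some (map f xs) = map Some ys" using mw wx by (simp only:)
  then have "map f xs = ys" using inj_map_eq_map[of Some "map f xs" ys] by (simp only: inj_Some)
  moreover have "xs \<in> tuples {..<m} (length ys)" using wt wx map_Some_tuples by metis
  ultimately show "w \<in> map Some ` {xs \<in> tuples {..<m} (length ys). map f xs = ys}" using wx by blast
next
  fix w assume "w \<in> map Some ` {xs \<in> tuples {..<m} (length ys). map f xs = ys}"
  then obtain xs where xs: "w = map Some xs" "xs \<in> tuples {..<m} (length ys)" "map f xs = ys" by blast
  then show "w \<in> fibre m f (map Some ys)" using map_Some_tuples by (auto simp: fibre_def)
qed

lemma lpush_option_map_Some:
  "lpush (optset m) (map_option f) \<Phi> (map Some ys) = lpush {..<m} f (\<lambda>xs. \<Phi> (map Some xs)) ys"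
proof -
  have inj: "inj_on (map Some) A" for A :: "nat list set" by (simp add: inj_on_def)
  show ?thesis
    unfolding lpush_option_fibre fibre_map_Some sum.reindex[OF inj] by (simp add: lpush_def comp_def)
qed

lemma restrict_Some_natural: "restrict_Some (lpush (optset m) (map_option f) \<Phi>) = lpush {..<m} f (restrict_Some \<Phi>)"
  unfolding restrict_Some_def[abs_def] by (rule ext) (simp add: lpush_option_map_Some)

lemma extend_Some_off_index:
  assumes v: "v \<in> PFA (Suc n) m" and ng: "\<not> pk_index n m z" shows "extend_Some v z = 0"
proof (cases "None \<in> set z")
  case False
  have "map the z \<notin> tuples {..<m} (Suc n)"
  proof
    assume a: "map the z \<in> tuples {..<m} (Suc n)"
    then have zt: "z \<in> tuples (optset m) (Suc n)" using map_Some_tuples map_Some_the[OF False] by metis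
    then have "z \<noteq> []" by (auto simp: tuples_def)
    then have "hd z \<in> set z" by simp
    then have "hd z \<noteq> None" using False by metis
    then show False using ng zt by (simp add: pk_index_def)
  qed
  then show ?thesis using v False by (simp add: extend_Some_def PFA_def)
qed (simp add: extend_Some_def)

lemma extend_Some_mem:
  assumes v: "v \<in> PFA (Suc n) m" shows "extend_Some v \<in> reduced_upto n 0 m"
proof -
  have "extend_Some v z = 0" if "0 < i" "i \<le> n" "pk_index n m z" "z!i = None" for i z
  proof -
    have "i < length z" using pk_index_length[OF that(3)] that(2) by simp
    then have "None \<in> set z" using that(4) by (metis nth_mem)
    then show ?thesis by (simp add: extend_Some_def)
  qed
  then show ?thesis unfolding reduced_upto_def using extend_Some_off_index[OF v] by auto
qed

lemma restrict_Some_PFA: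
  assumes V: "\<Phi> \<in> reduced_upto n 0 m" shows "restrict_Some \<Phi> \<in> PFA (Suc n) m"
proof -
  have "restrict_Some \<Phi> xs = 0" if "xs \<notin> tuples {..<m} (Suc n)" for xs
  proof -
    have "\<not> pk_index n m (map Some xs)" using that map_Some_tuples by (auto simp: pk_index_def)
    then show ?thesis using reduced_upto_off_index[OF V] by (simp add: restrict_Some_def)
  qed
  then show ?thesis by (simp add: PFA_def)
qed

lemma restrict_extend_Some: "restrict_Some (extend_Some v) = v"
  by (rule ext) (simp add: restrict_Some_def extend_Some_def comp_def)

lemma extend_restrict_Some:
  assumes V: "\<Phi> \<in> reduced_upto n 0 m" shows "extend_Some (restrict_Some \<Phi>) = \<Phi>"
proof
  fix z
  show "extend_Some (restrict_Some \<Phi>) z = \<Phi> z"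
  proof (cases "None \<in> set z")
    case False then show ?thesis unfolding extend_Some_def restrict_Some_def using map_Some_the[OF False] by (simp del: map_map)
  next
    case True
    show ?thesis
    proof (cases "pk_index n m z")
      case False then show ?thesis using reduced_upto_off_index[OF V False] True by (simp add: extend_Some_def)
    next
      case g: True
      obtain k where k: "k < length z" "z!k = None" using True by (metis in_set_conv_nth)
      have "k \<noteq> 0"
      proof
        assume "k = 0"
        then have "hd z = None" using k hd_conv_nth[of z] by auto
        then show False using g by (simp add: pk_index_def)
      qed
      moreover have "k \<le> n" using k pk_index_length[OF g] by simp
      ultimately have "\<Phi> z = 0" using reduced_upto_None[OF V _ _ k(2)] by simp
      then show ?thesis using True by (simp add: extend_Some_def)
    qed
  qed
qed

lemma lin_on_extend_Some: "lin_on V extend_Some"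
  unfolding lin_on_def extend_Some_def by (auto simp: fun_eq_iff)

lemma extend_Some_natural:
  "extend_Some (lpush {..<m} f v) = lpush (optset m) (map_option f) (extend_Some v)"
proof
  fix z
  show "extend_Some (lpush {..<m} f v) z = lpush (optset m) (map_option f) (extend_Some v) z"
  proof (cases "None \<in> set z")
    case True
    have "extend_Some v w = 0" if w: "w \<in> fibre m f z" for w
    proof -
      obtain k where k: "k < length z" "z!k = None" using True by (metis in_set_conv_nth)
      have "map_option f (w!k) = None" using fibre_nth[OF w k(1)] k(2) by simp
      then have "w!k = None" by simp
      moreover have "k < length w" using fibre_length[OF w] k by simp
      ultimately have "None \<in> set w" by (metis nth_mem)
      then show ?thesis by (simp add: extend_Some_def)
    qed
    then show ?thesis using True by (simp add: extend_Some_def lpush_option_fibre)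
  next
    case False
    define ys where "ys = map the z"
    have z: "z = map Some ys" using map_Some_the[OF False] ys_def by simp
    show ?thesis unfolding z lpush_option_map_Some by (simp add: extend_Some_def comp_def)
  qed
qed

lemma fa_nat_extend_Some:
  "fa_nat (PFA (Suc n) :: (nat list, 'k::field) fa_obj) PFA_act (reduced_upto n 0) PPbarKbar_act (\<lambda>m. extend_Some)"
  unfolding fa_nat_def PFA_act_def PPbarKbar_act_def
  using lin_on_extend_Some extend_Some_mem extend_Some_natural by blast

lemma bij_betw_extend_Some:
  "bij_betw extend_Some (PFA (Suc n) m :: (nat list \<Rightarrow> 'k::field) set) (reduced_upto n 0 m)"
  by (rule bij_betw_byWitness[where f'=restrict_Some])
    (use restrict_extend_Some extend_restrict_Some extend_Some_mem restrict_Some_PFA in auto)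

lemma fa_nat_reduce_slot:
  assumes "Suc j \<le> n"
  shows "fa_nat (reduced_upto n j :: (nat option list, 'k::field) fa_obj) PPbarKbar_act
      (reduced_upto n (Suc j)) PPbarKbar_act (\<lambda>m. reduce_slot n (Suc j) m)"
  unfolding fa_nat_def
proof (intro conjI allI impI ballI)
  fix m
  show "lin_on (reduced_upto n j m) (reduce_slot n (Suc j) m :: (nat option list \<Rightarrow> 'k) \<Rightarrow> _)"
    by (rule lin_on_reduce_slot)
  show "reduce_slot n (Suc j) m ` (reduced_upto n j m :: (nat option list \<Rightarrow> 'k) set) \<subseteq> reduced_upto n (Suc j) m"
    using reduce_slot_mem[OF _ assms] by blast
next
  fix m m' f and v :: "nat option list \<Rightarrow> 'k" assume f: "famap m m' f" and v: "v \<in> reduced_upto n j m"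
  show "reduce_slot n (Suc j) m' (PPbarKbar_act m m' f v) = PPbarKbar_act m m' f (reduce_slot n (Suc j) m v)"
    unfolding PPbarKbar_act_def
    by (rule reduce_slot_natural[OF f]) (use reduced_upto_off_index[OF v] assms in auto)
qed

lemma bij_betw_reduce_slot:
  assumes "Suc j \<le> n"
  shows "bij_betw (reduce_slot n (Suc j) m) (reduced_upto n j m :: (nat option list \<Rightarrow> 'k::field) set)
      (reduced_upto n (Suc j) m)"
  by (rule bij_betw_byWitness[where f'="unreduce_slot n (Suc j) m"])
    (use unreduce_reduce_slot reduce_unreduce_slot reduce_slot_mem unreduce_slot_mem assms in auto)

fun reduce_upto :: "nat \<Rightarrow> nat \<Rightarrow> nat \<Rightarrow> (nat list \<Rightarrow> 'k::field) \<Rightarrow> nat option list \<Rightarrow> 'k" where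
  "reduce_upto n 0 m v = extend_Some v"
| "reduce_upto n (Suc j) m v = reduce_slot n (Suc j) m (reduce_upto n j m v)"

lemma reduce_upto_iso:
  assumes "j \<le> n"
  shows "fa_nat (PFA (Suc n) :: (nat list, 'k::field) fa_obj) PFA_act (reduced_upto n j) PPbarKbar_act (reduce_upto n j)
    \<and> (\<forall>m. bij_betw (reduce_upto n j m) (PFA (Suc n) m :: (nat list \<Rightarrow> 'k) set) (reduced_upto n j m))"
  using assms
proof (induction j)
  case 0
  have "reduce_upto n 0 = (\<lambda>m. extend_Some)" by (intro ext) simp
  then show ?case by (simp add: fa_nat_extend_Some bij_betw_extend_Some)
next
  case (Suc j)
  then have IH: "fa_nat (PFA (Suc n) :: (nat list, 'k::field) fa_obj) PFA_act (reduced_upto n j) PPbarKbar_act (reduce_upto n j)"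
    "bij_betw (reduce_upto n j m) (PFA (Suc n) m :: (nat list \<Rightarrow> 'k) set) (reduced_upto n j m)" for m
    by auto
  have step: "reduce_upto n (Suc j) = (\<lambda>m v. reduce_slot n (Suc j) m (reduce_upto n j m v))"
    by (intro ext) simp
  show ?case
    unfolding step
    using fa_nat_comp[OF IH(1) fa_nat_reduce_slot[OF Suc.prems]]
      bij_betw_trans[OF IH(2) bij_betw_reduce_slot[OF Suc.prems]]
    by (simp add: comp_def)
qed

lemma PFA_iso_PPbarKbar:
  "fa_isomorphic (PFA (Suc n) :: (nat list, 'k::field) fa_obj) PFA_act (PPbarKbar n) PPbarKbar_act"
proof -
  have "reduced_upto n n = (PPbarKbar n :: (nat option list, 'k) fa_obj)"
    by (intro ext) (rule reduced_upto_top)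
  then show ?thesis using reduce_upto_iso[of n n, where 'k='k] unfolding fa_isomorphic_def by auto
qed

section \<open>\<open>P \<otimes> Pbar\<^sup>\<otimes>\<^sup>n\<close> is a natural retract of \<open>P\<^sub>n\<^sub>+\<^sub>1\<close>\<close>

lemma PPbar_slot_sum:
  assumes v: "v \<in> PPbar n m" and i: "1 \<le> i" "i \<le> n"
  shows "(\<Sum>x<m. v (xs[i:=x])) = 0"
proof (cases "m = 0")
  case True then show ?thesis by simp
next
  case False
  show ?thesis
  proof (cases "xs[i:=0] \<in> tuples {..<m} (Suc n)")
    case True
    have h: "\<forall>xs\<in>tuples {..<m} (Suc n). (\<Sum>x<m. v (xs[i := x])) = 0" using v i by (auto simp: PPbar_def)
    have "(\<Sum>x<m. v ((xs[i:=0])[i:=x])) = 0" using bspec[OF h True] .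
    then show ?thesis by simp
  next
    case nt: False
    have "v (xs[i:=x]) = 0" if "x < m" for x
    proof -
      have "xs[i:=x] \<notin> tuples {..<m} (Suc n)"
        using nt tuples_list_update_swap[of xs i x "{..<m}" "Suc n" 0] False by auto
      then show ?thesis using v by (simp add: PPbar_def PFA_def)
    qed
    then show ?thesis by simp
  qed
qed

lemma reduce_slot_fixed:
  assumes sup: "\<forall>z. \<not> pk_index n m z \<longrightarrow> \<Phi> z = 0" and nz: "\<forall>z. pk_index n m z \<longrightarrow> z!i = None \<longrightarrow> \<Phi> z = 0"
    and ps: "\<forall>z. slot_sum m i \<Phi> z = 0"
  shows "reduce_slot n i m \<Phi> = \<Phi>"
proof
  fix z show "reduce_slot n i m \<Phi> z = \<Phi> z"
    using sup nz ps by (cases "pk_index n m z"; cases "z!i = None") (auto simp: reduce_slot_def)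
qed

lemma PPbar_PFA: "v \<in> PPbar n m \<Longrightarrow> v \<in> PFA (Suc n) m"
  by (simp add: PPbar_def)

lemma slot_sum_extend_Some_PPbar:
  assumes v: "v \<in> PPbar n m" and i: "1 \<le> i" "i \<le> n"
  shows "slot_sum m i (extend_Some v) z = 0"
proof (cases "i < length z")
  case False
  have "extend_Some v z = 0"
  proof (cases "None \<in> set z")
    case True then show ?thesis by (simp add: extend_Some_def)
  next
    case nN: False
    have "map the z \<notin> tuples {..<m} (Suc n)" using False i by (auto simp: tuples_def)
    then show ?thesis using PPbar_PFA[OF v] nN by (simp add: extend_Some_def PFA_def)
  qed
  then show ?thesis using False by (simp add: slot_sum_def list_update_beyond)
next
  case True
  show ?thesis
  proof (cases "\<exists>k<length z. k \<noteq> i \<and> z!k = None")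
    case True
    then obtain k where k: "k < length z" "k \<noteq> i" "z!k = None" by blast
    have "None \<in> set (z[i:=Some y])" for y
      using k by (metis length_list_update nth_list_update_neq nth_mem)
    then show ?thesis by (simp add: slot_sum_def extend_Some_def)
  next
    case nk: False
    have "None \<notin> set (z[i:=Some y])" for y
    proof
      assume "None \<in> set (z[i:=Some y])"
      then obtain k where k: "k < length z" "(z[i:=Some y])!k = None" by (auto simp: in_set_conv_nth)
      then show False using nk True by (cases "k = i") auto
    qed
    then have "slot_sum m i (extend_Some v) z = (\<Sum>y<m. v ((map the z)[i:=y]))"
      by (simp add: slot_sum_def extend_Some_def map_update)
    also have "\<dots> = 0" by (rule PPbar_slot_sum[OF v i])
    finally show ?thesis .
  qed
qed

lemma reduce_upto_PPbar:
  assumes v: "v \<in> PPbar n m"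
  shows "j \<le> n \<Longrightarrow> reduce_upto n j m v = extend_Some v"
proof (induction j)
  case 0 then show ?case by simp
next
  case (Suc j)
  have sup: "\<forall>z. \<not> pk_index n m z \<longrightarrow> extend_Some v z = 0" using extend_Some_off_index[OF PPbar_PFA[OF v]] by blast
  have nz: "\<forall>z. pk_index n m z \<longrightarrow> z!(Suc j) = None \<longrightarrow> extend_Some v z = 0"
  proof (intro allI impI)
    fix z assume g: "pk_index n m z" and zn: "z!(Suc j) = None"
    have "Suc j < length z" using pk_index_length[OF g] Suc.prems by simp
    then have "None \<in> set z" using zn by (metis nth_mem)
    then show "extend_Some v z = 0" by (simp add: extend_Some_def)
  qed
  have ps: "\<forall>z. slot_sum m (Suc j) (extend_Some v) z = 0" using slot_sum_extend_Some_PPbar[OF v, of "Suc j"] Suc.prems by simp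
  show ?case using Suc reduce_slot_fixed[OF sup nz ps] by simp
qed

text \<open>
  Restricting to lists without \<open>None\<close> is the projection of \<open>P \<otimes> (Pbar \<oplus> kbar)\<^sup>\<otimes>\<^sup>n\<close>
  onto its summand \<open>P \<otimes> Pbar\<^sup>\<otimes>\<^sup>n\<close>; on that summand \<open>reduce_upto\<close> agrees with \<open>extend_Some\<close>.
\<close>

definition PPbar_retract :: "nat \<Rightarrow> nat \<Rightarrow> (nat list \<Rightarrow> 'k::field) \<Rightarrow> nat list \<Rightarrow> 'k" where
  "PPbar_retract n m v = restrict_Some (reduce_upto n n m v)"

lemma reduce_upto_natural: "fa_nat (PFA (Suc n) :: (nat list, 'k::field) fa_obj) PFA_act (reduced_upto n n) PPbarKbar_act (reduce_upto n n)"
  using reduce_upto_iso[of n n, where 'k='k] by blast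

lemma PPbar_retract_mem:
  fixes v :: "nat list \<Rightarrow> 'k::field"
  assumes v: "v \<in> PFA (Suc n) m" shows "PPbar_retract n m v \<in> PPbar n m"
proof -
  define \<Phi> where "\<Phi> = reduce_upto n n m v"
  have V: "\<Phi> \<in> reduced_upto n n m" using fa_nat_closed[OF reduce_upto_natural v] \<Phi>_def by simp
  have 1: "PPbar_retract n m v \<in> PFA (Suc n) m"
  proof -
    have "restrict_Some \<Phi> xs = 0" if "xs \<notin> tuples {..<m} (Suc n)" for xs
    proof -
      have "\<not> pk_index n m (map Some xs)" using that map_Some_tuples by (auto simp: pk_index_def)
      then show ?thesis using reduced_upto_off_index[OF V] by (simp add: restrict_Some_def)
    qed
    then show ?thesis by (simp add: PFA_def PPbar_retract_def \<Phi>_def)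
  qed
  have 2: "(\<Sum>x<m. PPbar_retract n m v (xs[i:=x])) = 0" if "i \<in> {1..n}" for i xs
  proof -
    have "(\<Sum>x<m. PPbar_retract n m v (xs[i:=x])) = slot_sum m i \<Phi> (map Some xs)"
      by (simp add: PPbar_retract_def restrict_Some_def slot_sum_def \<Phi>_def map_update)
    also have "\<dots> = 0" using reduced_upto_slot_sum[OF V] that by simp
    finally show ?thesis .
  qed
  show ?thesis using 1 2 by (simp add: PPbar_def)
qed

lemma PPbar_retract_fixes: "v \<in> PPbar n m \<Longrightarrow> PPbar_retract n m v = v"
  using reduce_upto_PPbar[of v n m n] by (simp add: PPbar_retract_def restrict_extend_Some)

lemma lin_on_PPbar_retract: "lin_on (PFA (Suc n) m :: (nat list \<Rightarrow> 'k::field) set) (PPbar_retract n m)"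
proof -
  have L: "lin_on (PFA (Suc n) m :: (nat list \<Rightarrow> 'k::field) set) (reduce_upto n n m)" using fa_nat_lin[OF reduce_upto_natural] .
  show ?thesis unfolding lin_on_def
  proof (intro conjI ballI allI)
    fix u v :: "nat list \<Rightarrow> 'k" assume "u \<in> PFA (Suc n) m" "v \<in> PFA (Suc n) m"
    then show "PPbar_retract n m (\<lambda>z. u z + v z) = (\<lambda>y. PPbar_retract n m u y + PPbar_retract n m v y)"
      using lin_on_add[OF L] by (simp add: PPbar_retract_def restrict_Some_def[abs_def])
  next
    fix c and u :: "nat list \<Rightarrow> 'k" assume "u \<in> PFA (Suc n) m"
    then show "PPbar_retract n m (\<lambda>z. c * u z) = (\<lambda>y. c * PPbar_retract n m u y)"
      using lin_on_smult[OF L] by (simp add: PPbar_retract_def restrict_Some_def[abs_def])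
  qed
qed

lemma PPbar_retract_natural:
  fixes v :: "nat list \<Rightarrow> 'k::field"
  assumes f: "famap m m' f" and v: "v \<in> PFA (Suc n) m"
  shows "PPbar_retract n m' (PFA_act m m' f v) = PFA_act m m' f (PPbar_retract n m v)"
  unfolding PPbar_retract_def using fa_nat_commute[OF reduce_upto_natural f v] by (simp add: PPbarKbar_act_def PFA_act_def restrict_Some_natural)

lemma fa_nat_PPbar_retract: "fa_nat (PFA (Suc n) :: (nat list, 'k::field) fa_obj) PFA_act (PPbar n) PFA_act (PPbar_retract n)"
  unfolding fa_nat_def using lin_on_PPbar_retract PPbar_retract_mem PPbar_retract_natural by blast

lemma subsp_PPbar: "subsp (PPbar n m :: (nat list \<Rightarrow> 'k::field) set)"
  unfolding subsp_def PPbar_def PFA_def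
  by (auto simp: sum.distrib sum_distrib_left[symmetric])

lemma fa_module_PPbar: "fa_module (PPbar n :: (nat list, 'k::field) fa_obj) PFA_act"
proof (rule fa_module_subfunctor[OF fa_module_PFA])
  show "subsp (PPbar n m :: (nat list \<Rightarrow> 'k::field) set)" for m by (rule subsp_PPbar)
  show "PPbar n m \<subseteq> PFA (Suc n) m" for m by (auto simp: PPbar_def)
  fix m m' f and v :: "nat list \<Rightarrow> 'k" assume f: "famap m m' f" and v: "v \<in> PPbar n m"
  have vP: "v \<in> PFA (Suc n) m" using PPbar_PFA[OF v] .
  have "PFA_act m m' f v = PFA_act m m' f (PPbar_retract n m v)" using PPbar_retract_fixes[OF v] by simp
  also have "\<dots> = PPbar_retract n m' (PFA_act m m' f v)" using PPbar_retract_natural[OF f vP] by simp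
  finally show "PFA_act m m' f v \<in> PPbar n m'"
    using PPbar_retract_mem[OF fa_module_closed[OF fa_module_PFA f vP]] by simp
qed

lemma PPbar_kernel_complement:
  fixes n :: nat and C :: "(nat list, 'k::field) fa_obj"
  defines "C \<equiv> fa_kernel (PFA (Suc n)) (PPbar_retract n)"
  shows "C m \<subseteq> PFA (Suc n) m"
    and "PPbar n m \<inter> C m = {\<lambda>_. 0}"
    and "{(\<lambda>xs. u xs + v xs) | u v. u \<in> PPbar n m \<and> v \<in> C m} = PFA (Suc n) m"
proof -
  have PFA: "subsp (PFA (Suc n) m :: (nat list \<Rightarrow> 'k) set)" by (rule fa_module_subsp[OF fa_module_PFA])
  have sub: "PPbar n m \<subseteq> PFA (Suc n) m" using PPbar_PFA by blast
  note complement = retraction_kernel_complement[OF PFA sub subsp_zero[OF subsp_PPbar]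
      lin_on_PPbar_retract PPbar_retract_mem PPbar_retract_fixes]
  show "C m \<subseteq> PFA (Suc n) m" by (auto simp: C_def fa_kernel_def)
  show "PPbar n m \<inter> C m = {\<lambda>_. 0}"
    using complement(1) by (simp add: C_def fa_kernel_def)
  show "{(\<lambda>xs. u xs + v xs) | u v. u \<in> PPbar n m \<and> v \<in> C m} = PFA (Suc n) m"
    using complement(2) by (simp add: C_def fa_kernel_def)
qed

lemma fa_module_PPbar_kernel:
  "fa_module (fa_kernel (PFA (Suc n)) (PPbar_retract n) :: (nat list, 'k::field) fa_obj) PFA_act"
  by (rule fa_module_kernel[OF fa_module_PFA fa_module_PPbar fa_nat_PPbar_retract])

lemma fa_projective_PPbar: "fa_projective TYPE('a) (PPbar n :: (nat list, 'k::field) fa_obj) PFA_act"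
  by (rule fa_projective_retract[OF fa_projective_PFA _ fa_nat_PPbar_retract PPbar_retract_fixes])
    (use PPbar_PFA in blast)

section \<open>Splitting \<open>P \<otimes> (Pbar \<oplus> kbar)\<^sup>\<otimes>\<^sup>n\<close> by the slots carrying \<open>Pbar\<close>\<close>

text \<open>
  A basis index with \<open>Some\<close> exactly at the slots \<open>S \<subseteq> {1..n}\<close> is \<open>expand (slot_mask n S) xs\<close>
  for a tuple \<open>xs\<close> of length \<open>card S + 1\<close>.  The copies of \<open>P \<otimes> Pbar\<^sup>\<otimes>\<^sup>k\<close> in \<open>DSum n\<close> are
  matched with the \<open>k\<close>-subsets \<open>S\<close> through an arbitrary enumeration \<open>enum_slot_set\<close>.
\<close>

fun expand :: "bool list \<Rightarrow> 'a list \<Rightarrow> 'a option list" where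
  "expand [] xs = []"
| "expand (b#bs) xs = (if b then Some (hd xs) # expand bs (tl xs) else None # expand bs xs)"

definition count_True :: "bool list \<Rightarrow> nat" where "count_True bs = length (filter id bs)"
definition compress :: "'a option list \<Rightarrow> 'a list" where "compress z = map the (filter (\<lambda>a. a \<noteq> None) z)"
definition some_pattern :: "'a option list \<Rightarrow> bool list" where "some_pattern z = map (\<lambda>a. a \<noteq> None) z"

lemma count_True_simps[simp]: "count_True [] = 0" "count_True (True#bs) = Suc (count_True bs)" "count_True (False#bs) = count_True bs"
  by (auto simp: count_True_def)

lemma length_expand[simp]: "length (expand bs xs) = length bs"
  by (induct bs arbitrary: xs) auto

lemma compress_expand: "length xs = count_True bs \<Longrightarrow> compress (expand bs xs) = xs"
proof (induct bs arbitrary: xs)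
  case Nil then show ?case by (simp add: compress_def)
next
  case (Cons b bs)
  show ?case
  proof (cases b)
    case True
    then obtain x xs' where xs: "xs = x # xs'" using Cons.prems by (cases xs) auto
    then show ?thesis using Cons True by (simp add: compress_def)
  next
    case False then show ?thesis using Cons by (simp add: compress_def)
  qed
qed

lemma inj_on_expand: "inj_on (expand bs) {xs. length xs = count_True bs}"
  by (rule inj_on_inverseI[where g=compress]) (simp add: compress_expand)

lemma some_pattern_expand: "length xs = count_True bs \<Longrightarrow> some_pattern (expand bs xs) = bs"
proof (induct bs arbitrary: xs)
  case Nil then show ?case by (simp add: some_pattern_def)
next
  case (Cons b bs)
  show ?case
  proof (cases b)
    case True
    then obtain x xs' where xs: "xs = x # xs'" using Cons.prems by (cases xs) auto
    then show ?thesis using Cons True by (simp add: some_pattern_def)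
  next
    case False then show ?thesis using Cons by (simp add: some_pattern_def)
  qed
qed

lemma expand_some_pattern_compress: "expand (some_pattern z) (compress z) = z"
proof (induct z)
  case Nil then show ?case by (simp add: some_pattern_def compress_def)
next
  case (Cons a z)
  then show ?case by (cases a) (auto simp: some_pattern_def compress_def)
qed

lemma length_compress: "length (compress z) = count_True (some_pattern z)"
  by (simp add: compress_def count_True_def some_pattern_def filter_map comp_def)

lemma length_some_pattern[simp]: "length (some_pattern z) = length z" by (simp add: some_pattern_def)

lemma map_option_expand: "length xs = count_True bs \<Longrightarrow> map (map_option f) (expand bs xs) = expand bs (map f xs)"
proof (induct bs arbitrary: xs)
  case Nil then show ?case by simp
next
  case (Cons b bs)
  show ?case
  proof (cases b)
    case True
    then obtain x xs' where xs: "xs = x # xs'" using Cons.prems by (cases xs) auto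
    then show ?thesis using Cons True by simp
  next
    case False then show ?thesis using Cons by simp
  qed
qed

lemma set_expand_minus_None: "length xs = count_True bs \<Longrightarrow> set (expand bs xs) - {None} = Some ` set xs"
proof (induct bs arbitrary: xs)
  case Nil then show ?case by simp
next
  case (Cons b bs)
  show ?case
  proof (cases b)
    case True
    then obtain x xs' where xs: "xs = x # xs'" using Cons.prems by (cases xs) auto
    then show ?thesis using Cons True by auto
  next
    case False then show ?thesis using Cons by auto
  qed
qed

lemma expand_in_tuples_iff:
  assumes "length xs = count_True bs"
  shows "expand bs xs \<in> tuples (optset m) (length bs) \<longleftrightarrow> xs \<in> tuples {..<m} (length xs)"
proof -
  have "set (expand bs xs) \<subseteq> optset m \<longleftrightarrow> set (expand bs xs) - {None} \<subseteq> optset m"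
    by (auto simp: optset_def)
  also have "\<dots> \<longleftrightarrow> Some ` set xs \<subseteq> optset m" using set_expand_minus_None[OF assms] by simp
  also have "\<dots> \<longleftrightarrow> set xs \<subseteq> {..<m}" by (auto simp: optset_def)
  finally show ?thesis by (simp add: tuples_def)
qed

lemma expand_list_update:
  "length xs = count_True bs \<Longrightarrow> r < length xs \<Longrightarrow>
   \<exists>p<length bs. r \<le> p \<and> (\<forall>x. expand bs (xs[r:=x]) = (expand bs xs)[p := Some x])"
proof (induct bs arbitrary: xs r)
  case Nil then show ?case by simp
next
  case (Cons b bs)
  show ?case
  proof (cases b)
    case True
    then obtain x0 xs' where xs: "xs = x0 # xs'" using Cons.prems by (cases xs) auto
    show ?thesis
    proof (cases r)
      case 0 then show ?thesis using True xs by auto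
    next
      case (Suc r')
      obtain p' where p': "p' < length bs" "r' \<le> p'" "\<forall>x. expand bs (xs'[r':=x]) = (expand bs xs')[p' := Some x]"
        using Cons.hyps[of xs' r'] Cons.prems xs Suc True by auto
      show ?thesis using p' xs Suc True by (intro exI[of _ "Suc p'"]) auto
    qed
  next
    case False
    obtain p' where p': "p' < length bs" "r \<le> p'" "\<forall>x. expand bs (xs[r:=x]) = (expand bs xs)[p' := Some x]"
      using Cons.hyps[of xs r] Cons.prems False by auto
    show ?thesis using p' False by (intro exI[of _ "Suc p'"]) auto
  qed
qed

lemma expand_list_update_at_True:
  "length xs = count_True bs \<Longrightarrow> p < length bs \<Longrightarrow> bs!p \<Longrightarrow>
   \<exists>r<length xs. (hd bs \<and> 0 < p \<longrightarrow> 0 < r) \<and> (\<forall>x. expand bs (xs[r:=x]) = (expand bs xs)[p := Some x])"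
proof (induct bs arbitrary: xs p)
  case Nil then show ?case by simp
next
  case (Cons b bs)
  show ?case
  proof (cases b)
    case True
    then obtain x0 xs' where xs: "xs = x0 # xs'" using Cons.prems by (cases xs) auto
    show ?thesis
    proof (cases p)
      case 0 then show ?thesis using True xs by (intro exI[of _ 0]) auto
    next
      case (Suc p')
      obtain r' where r': "r' < length xs'" "\<forall>x. expand bs (xs'[r':=x]) = (expand bs xs')[p' := Some x]"
        using Cons.hyps[of xs' p'] Cons.prems xs Suc True by auto
      show ?thesis using r' xs Suc True by (intro exI[of _ "Suc r'"]) auto
    qed
  next
    case False
    then obtain p' where Suc: "p = Suc p'" using Cons.prems by (cases p) auto
    obtain r where r: "r < length xs" "\<forall>x. expand bs (xs[r:=x]) = (expand bs xs)[p' := Some x]"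
      using Cons.hyps[of xs p'] Cons.prems Suc False by auto
    show ?thesis using r Suc False by (intro exI[of _ r]) auto
  qed
qed

lemma some_pattern_nth: "i < length z \<Longrightarrow> some_pattern z ! i = (z!i \<noteq> None)"
  by (simp add: some_pattern_def)

lemma some_pattern_map_option: "some_pattern (map (map_option f) z) = some_pattern z"
  by (simp add: some_pattern_def comp_def)

definition slot_mask :: "nat \<Rightarrow> nat set \<Rightarrow> bool list" where
  "slot_mask n S = True # map (\<lambda>i. i \<in> S) [1..<Suc n]"

lemma length_slot_mask[simp]: "length (slot_mask n S) = Suc n" by (simp add: slot_mask_def)
lemma slot_mask_nth0[simp]: "slot_mask n S ! 0 = True" by (simp add: slot_mask_def)
lemma hd_slot_mask[simp]: "hd (slot_mask n S) = True" by (simp add: slot_mask_def)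
lemma slot_mask_nth: "1 \<le> i \<Longrightarrow> i \<le> n \<Longrightarrow> slot_mask n S ! i = (i \<in> S)"
  by (cases i) (auto simp del: upt_Suc simp: slot_mask_def nth_map nth_upt)

lemma count_True_slot_mask: assumes "S \<subseteq> {1..n}" shows "count_True (slot_mask n S) = Suc (card S)"
proof -
  have "count_True (slot_mask n S) = Suc (length (filter (\<lambda>i. i \<in> S) [1..<Suc n]))"
    by (simp add: slot_mask_def count_True_def filter_map comp_def)
  also have "length (filter (\<lambda>i. i \<in> S) [1..<Suc n]) = card (set (filter (\<lambda>i. i \<in> S) [1..<Suc n]))"
    by (rule distinct_card[symmetric]) simp
  also have "set (filter (\<lambda>i. i \<in> S) [1..<Suc n]) = S" using assms by auto
  finally show ?thesis .
qed

definition some_slots :: "nat \<Rightarrow> nat option list \<Rightarrow> nat set" where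
  "some_slots n z = {i \<in> {1..n}. z!i \<noteq> None}"

lemma some_slots_subset: "some_slots n z \<subseteq> {1..n}" by (auto simp: some_slots_def)

lemma some_pattern_pk_index:
  assumes l: "length z = Suc n" and h: "hd z \<noteq> None"
  shows "some_pattern z = slot_mask n (some_slots n z)"
proof (rule nth_equalityI)
  show "length (some_pattern z) = length (slot_mask n (some_slots n z))" using l by simp
  fix i assume i: "i < length (some_pattern z)"
  show "some_pattern z ! i = slot_mask n (some_slots n z) ! i"
  proof (cases i)
    case 0
    have "z \<noteq> []" using l by auto
    then show ?thesis using 0 h some_pattern_nth[of 0 z] hd_conv_nth[of z] by simp
  next
    case (Suc i')
    then show ?thesis using i l some_pattern_nth[of i z] slot_mask_nth[of i n] by (simp add: some_slots_def)
  qed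
qed

lemma some_slots_expand:
  assumes S: "S \<subseteq> {1..n}" and l: "length xs = Suc (card S)"
  shows "some_slots n (expand (slot_mask n S) xs) = S"
proof -
  have p: "some_pattern (expand (slot_mask n S) xs) = slot_mask n S" using some_pattern_expand[of xs "slot_mask n S"] count_True_slot_mask[OF S] l by simp
  have "expand (slot_mask n S) xs ! i \<noteq> None \<longleftrightarrow> i \<in> S" if "1 \<le> i" "i \<le> n" for i
    using some_pattern_nth[of i "expand (slot_mask n S) xs"] p slot_mask_nth[OF that] that by simp
  then show ?thesis using S by (auto simp: some_slots_def)
qed

definition slot_sets :: "nat \<Rightarrow> nat \<Rightarrow> nat set set" where
  "slot_sets n k = {S. S \<subseteq> {1..n} \<and> card S = k}"

lemma finite_slot_sets: "finite (slot_sets n k)"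
  unfolding slot_sets_def by (rule finite_subset[of _ "Pow {1..n}"]) auto

lemma card_slot_sets: "card (slot_sets n k) = n choose k"
  unfolding slot_sets_def using n_subsets[of "{1..n}" k] by simp

definition enum_slot_set :: "nat \<Rightarrow> nat \<Rightarrow> nat \<Rightarrow> nat set" where
  "enum_slot_set n k = (SOME h. bij_betw h {0..<n choose k} (slot_sets n k))"

lemma enum_slot_set_bij: "bij_betw (enum_slot_set n k) {0..<n choose k} (slot_sets n k)"
proof -
  have "\<exists>h. bij_betw h {0..<n choose k} (slot_sets n k)"
    using ex_bij_betw_nat_finite[OF finite_slot_sets[of n k]] card_slot_sets by simp
  then show ?thesis unfolding enum_slot_set_def by (rule someI_ex)
qed

definition index_slot_set :: "nat \<Rightarrow> nat \<Rightarrow> nat set \<Rightarrow> nat" where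
  "index_slot_set n k S = the_inv_into {0..<n choose k} (enum_slot_set n k) S"

lemma enum_slot_set_mem: "j < n choose k \<Longrightarrow> enum_slot_set n k j \<in> slot_sets n k"
  using enum_slot_set_bij[of n k] by (auto simp: bij_betw_def)

lemma index_enum_slot_set: "j < n choose k \<Longrightarrow> index_slot_set n k (enum_slot_set n k j) = j"
  using enum_slot_set_bij[of n k] unfolding index_slot_set_def bij_betw_def by (auto intro: the_inv_into_f_f)

lemma index_slot_set_props: "S \<in> slot_sets n k \<Longrightarrow> index_slot_set n k S < n choose k \<and> enum_slot_set n k (index_slot_set n k S) = S"
proof -
  assume S: "S \<in> slot_sets n k"
  have b: "inj_on (enum_slot_set n k) {0..<n choose k}" "enum_slot_set n k ` {0..<n choose k} = slot_sets n k"
    using enum_slot_set_bij[of n k] by (auto simp: bij_betw_def)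
  have "index_slot_set n k S \<in> {0..<n choose k}" unfolding index_slot_set_def
    using the_inv_into_into[OF b(1) _ subset_refl, of S] S b(2) by auto
  moreover have "enum_slot_set n k (index_slot_set n k S) = S" unfolding index_slot_set_def
    using f_the_inv_into_f[OF b(1), of S] S b(2) by auto
  ultimately show ?thesis by simp
qed

definition split_slots :: "nat \<Rightarrow> nat \<Rightarrow> (nat option list \<Rightarrow> 'k::field) \<Rightarrow> nat \<times> nat \<times> nat list \<Rightarrow> 'k" where
  "split_slots n m \<Phi> = (\<lambda>(k,j,xs). if k \<le> n \<and> j < n choose k \<and> length xs = Suc k
      then \<Phi> (expand (slot_mask n (enum_slot_set n k j)) xs) else 0)"

definition merge_slots :: "nat \<Rightarrow> nat \<Rightarrow> (nat \<times> nat \<times> nat list \<Rightarrow> 'k::field) \<Rightarrow> nat option list \<Rightarrow> 'k" where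
  "merge_slots n m \<Psi> z = (if pk_index n m z then \<Psi> (card (some_slots n z), index_slot_set n (card (some_slots n z)) (some_slots n z), compress z) else 0)"

lemma index_slot_set_bounds:
  assumes "S \<subseteq> {1..n}"
  shows "card S \<le> n" "index_slot_set n (card S) S < n choose card S"
    "enum_slot_set n (card S) (index_slot_set n (card S) S) = S"
  using card_mono[OF _ assms] index_slot_set_props[of S n "card S"] assms by (auto simp: slot_sets_def)

lemma enum_slot_set_props:
  assumes "j < n choose k"
  shows "enum_slot_set n k j \<subseteq> {1..n}" "card (enum_slot_set n k j) = k"
  using enum_slot_set_mem[OF assms] by (auto simp: slot_sets_def)

lemma split_slots_component:
  fixes \<Phi> :: "nat option list \<Rightarrow> 'k::field"
  assumes P: "\<Phi> \<in> PPbarKbar n m" and kn: "k \<le> n" and jC: "j < n choose k"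
  shows "(\<lambda>xs. split_slots n m \<Phi> (k, j, xs)) \<in> PPbar k m"
proof -
  have V: "\<Phi> \<in> reduced_upto n n m" using P reduced_upto_top by blast
  define bs where "bs = slot_mask n (enum_slot_set n k j)"
  have cb: "count_True bs = Suc k" and lb: "length bs = Suc n"
    using count_True_slot_mask enum_slot_set_props[OF jC] by (auto simp: bs_def)
  have sl: "split_slots n m \<Phi> (k, j, xs) = (if length xs = Suc k then \<Phi> (expand bs xs) else 0)" for xs
    using kn jC by (simp add: split_slots_def bs_def)
  have "split_slots n m \<Phi> (k, j, xs) = 0" if "xs \<notin> tuples {..<m} (Suc k)" for xs
  proof (cases "length xs = Suc k")
    case True
    then have "\<not> pk_index n m (expand bs xs)"
      using expand_in_tuples_iff[of xs bs m] cb lb that by (simp add: pk_index_def)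
    then show ?thesis using sl reduced_upto_off_index[OF V] True by simp
  qed (simp add: sl)
  moreover have "(\<Sum>x<m. split_slots n m \<Phi> (k, j, xs[i:=x])) = 0"
    if i: "i \<in> {1..k}" and xs: "xs \<in> tuples {..<m} (Suc k)" for i xs
  proof -
    have lx: "length xs = Suc k" using xs by (simp add: tuples_def)
    obtain p where p: "p < length bs" "i \<le> p" "\<forall>x. expand bs (xs[i:=x]) = (expand bs xs)[p := Some x]"
      using expand_list_update[of xs bs i] lx cb i by auto
    have "(\<Sum>x<m. split_slots n m \<Phi> (k, j, xs[i:=x])) = slot_sum m p \<Phi> (expand bs xs)"
      using sl lx p(3) by (simp add: slot_sum_def)
    also have "\<dots> = 0" using reduced_upto_slot_sum[OF V, of p] p i lb by simp
    finally show ?thesis .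
  qed
  ultimately show ?thesis by (simp add: PPbar_def PFA_def)
qed

lemma split_slots_mem:
  assumes "\<Phi> \<in> PPbarKbar n m" shows "split_slots n m \<Phi> \<in> DSum n m"
  using split_slots_component[OF assms] unfolding DSum_def by (auto simp: split_slots_def)

lemma some_slots_update:
  assumes "i < length z" shows "some_slots n (z[i:=Some x]) = some_slots n (z[i:=Some y])"
  using assms by (auto simp: some_slots_def nth_list_update)

lemma DSum_component: "\<Psi> \<in> DSum n m \<Longrightarrow> k \<le> n \<Longrightarrow> j < n choose k \<Longrightarrow> (\<lambda>xs. \<Psi> (k, j, xs)) \<in> PPbar k m"
  by (simp add: DSum_def)

lemma DSum_eq_0:
  assumes "\<Psi> \<in> DSum n m" "\<not> (k \<le> n \<and> j < n choose k \<and> xs \<in> tuples {..<m} (Suc k))"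
  shows "\<Psi> (k, j, xs) = 0"
proof (cases "k \<le> n \<and> j < n choose k")
  case True then show ?thesis using assms unfolding DSum_def PPbar_def PFA_def by auto
next
  case False then show ?thesis using assms(1) unfolding DSum_def by (auto simp: not_le)
qed

text \<open>
  Varying slot \<open>i\<close> of \<open>z\<close> over \<open>Some x\<close> keeps the summand \<open>(k, j)\<close> fixed and varies one
  entry \<open>r > 0\<close> of the compressed tuple, i.e. one of its \<open>Pbar\<close> factors.
\<close>

lemma merge_slots_slot_update:
  assumes g: "pk_index n m (z[i:=None])" and i: "1 \<le> i" "i \<le> n" and m: "0 < m"
  obtains k j ys r where "k \<le> n" "j < n choose k" "length ys = Suc k" "1 \<le> r" "r \<le> k"
    "\<And>x. x < m \<Longrightarrow> merge_slots n m \<Psi> (z[i:=Some x]) = \<Psi> (k, j, ys[r:=x])"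
proof -
  have gx: "pk_index n m (z[i:=Some x])" if "x < m" for x
    using pk_index_update_swap[OF g, of "Some x"] that i by simp
  define z0 where "z0 = z[i:=Some 0]"
  have g0: "pk_index n m z0" using gx m z0_def by simp
  have il: "i < length z" using pk_index_length[OF g] i by simp
  define S where "S = some_slots n z0"
  have S: "S \<subseteq> {1..n}" using some_slots_subset S_def by simp
  define bs where "bs = slot_mask n S"
  have pz0: "some_pattern z0 = bs"
    using some_pattern_pk_index[of z0 n] g0 pk_index_length[OF g0] bs_def S_def by (simp add: pk_index_def)
  define ys where "ys = compress z0"
  have cb: "count_True bs = Suc (card S)" using count_True_slot_mask[OF S] bs_def by simp
  have ly: "length ys = Suc (card S)" using length_compress[of z0] pz0 cb ys_def by simp
  have z0e: "expand bs ys = z0" using expand_some_pattern_compress[of z0] pz0 ys_def by simp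
  have bi: "bs ! i" using il i z0_def bs_def slot_mask_nth[OF i, of S] by (simp add: S_def some_slots_def)
  obtain r where r: "r < length ys" "0 < r" "\<And>x. expand bs (ys[r:=x]) = (expand bs ys)[i := Some x]"
    using expand_list_update_at_True[of ys bs i] ly cb bi i pk_index_length[OF g] by (auto simp: bs_def)
  have upd: "merge_slots n m \<Psi> (z[i:=Some x]) = \<Psi> (card S, index_slot_set n (card S) S, ys[r:=x])"
    if "x < m" for x
  proof -
    have e: "z[i:=Some x] = expand bs (ys[r:=x])" using r(3) z0e z0_def by simp
    have "compress (z[i:=Some x]) = ys[r:=x]" using e compress_expand[of "ys[r:=x]" bs] ly cb by simp
    moreover have "some_slots n (z[i:=Some x]) = S" using some_slots_update[OF il] S_def z0_def by metis
    ultimately show ?thesis using gx[OF that] by (simp add: merge_slots_def)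
  qed
  show ?thesis
    by (rule that[of "card S" "index_slot_set n (card S) S" ys r])
      (use upd index_slot_set_bounds[OF S] ly r(1,2) in auto)
qed

lemma merge_slots_mem:
  assumes D: "\<Psi> \<in> DSum n m" shows "merge_slots n m \<Psi> \<in> PPbarKbar n m"
proof -
  have supp: "\<forall>z. \<not> pk_index n m z \<longrightarrow> merge_slots n m \<Psi> z = 0" by (simp add: merge_slots_def)
  have "slot_sum m i (merge_slots n m \<Psi>) z = 0" if i: "1 \<le> i" "i \<le> n" for i z
  proof (cases "m = 0 \<or> \<not> pk_index n m (z[i:=None])")
    case True
    then show ?thesis using slot_sum_off_index[OF _ _ supp] i by (auto simp: slot_sum_def)
  next
    case False
    then have g: "pk_index n m (z[i:=None])" and m: "0 < m" by auto
    obtain k j ys r where kj: "k \<le> n" "j < n choose k" "length ys = Suc k" "1 \<le> r" "r \<le> k"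
      and upd: "\<And>x. x < m \<Longrightarrow> merge_slots n m \<Psi> (z[i:=Some x]) = \<Psi> (k, j, ys[r:=x])"
      using merge_slots_slot_update[OF g i m] by blast
    then show ?thesis
      using PPbar_slot_sum[OF DSum_component[OF D kj(1,2)] kj(4,5)] by (simp add: slot_sum_def)
  qed
  then have "merge_slots n m \<Psi> \<in> reduced_upto n n m" unfolding reduced_upto_def using supp by auto
  then show ?thesis using reduced_upto_top by blast
qed

lemma merge_split_slots:
  fixes \<Phi> :: "nat option list \<Rightarrow> 'k::field"
  assumes P: "\<Phi> \<in> PPbarKbar n m" shows "merge_slots n m (split_slots n m \<Phi>) = \<Phi>"
proof
  fix z
  have V: "\<Phi> \<in> reduced_upto n n m" using P reduced_upto_top by blast
  show "merge_slots n m (split_slots n m \<Phi>) z = \<Phi> z"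
  proof (cases "pk_index n m z")
    case False then show ?thesis using reduced_upto_off_index[OF V False] by (simp add: merge_slots_def)
  next
    case g: True
    define S where "S = some_slots n z"
    have S: "S \<subseteq> {1..n}" using some_slots_subset S_def by simp
    have pz: "some_pattern z = slot_mask n S"
      using some_pattern_pk_index[of z n] g pk_index_length[OF g] S_def by (simp add: pk_index_def)
    have "length (compress z) = Suc (card S)"
      using length_compress[of z] pz count_True_slot_mask[OF S] by simp
    then have "split_slots n m \<Phi> (card S, index_slot_set n (card S) S, compress z) = \<Phi> z"
      using index_slot_set_bounds[OF S] expand_some_pattern_compress[of z] pz by (simp add: split_slots_def)
    then show ?thesis using g by (simp add: merge_slots_def S_def)
  qed
qed

lemma split_merge_slots:
  fixes \<Psi> :: "nat \<times> nat \<times> nat list \<Rightarrow> 'k::field"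
  assumes D: "\<Psi> \<in> DSum n m" shows "split_slots n m (merge_slots n m \<Psi>) = \<Psi>"
proof
  fix t :: "nat \<times> nat \<times> nat list"
  obtain k j xs where t: "t = (k, j, xs)" by (cases t) auto
  show "split_slots n m (merge_slots n m \<Psi>) t = \<Psi> t"
  proof (cases "k \<le> n \<and> j < n choose k \<and> length xs = Suc k")
    case False
    then have "\<Psi> (k, j, xs) = 0" by (intro DSum_eq_0[OF D]) (auto simp: tuples_def)
    moreover have "split_slots n m (merge_slots n m \<Psi>) t = 0" unfolding t split_slots_def prod.case if_not_P[OF False] ..
    ultimately show ?thesis using t by simp
  next
    case True
    then have kn: "k \<le> n" and jC: "j < n choose k" and lx: "length xs = Suc k" by auto
    define S where "S = enum_slot_set n k j"
    have S: "S \<subseteq> {1..n}" "card S = k" using enum_slot_set_props[OF jC] S_def by auto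
    define bs where "bs = slot_mask n S"
    have cb: "count_True bs = Suc k" using count_True_slot_mask[OF S(1)] S(2) bs_def by simp
    define e where "e = expand bs xs"
    have ze: "split_slots n m (merge_slots n m \<Psi>) t = merge_slots n m \<Psi> e" using True t by (simp add: split_slots_def e_def bs_def S_def)
    have xne: "xs \<noteq> []" using lx by auto
    have he: "hd e \<noteq> None" using xne by (simp add: e_def bs_def slot_mask_def)
    have ge: "pk_index n m e \<longleftrightarrow> xs \<in> tuples {..<m} (Suc k)"
      using expand_in_tuples_iff[of xs bs m] lx cb he by (simp add: pk_index_def e_def bs_def)
    show ?thesis
    proof (cases "xs \<in> tuples {..<m} (Suc k)")
      case True
      have so: "some_slots n e = S" using some_slots_expand[OF S(1)] lx S(2) by (simp add: e_def bs_def)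
      have ce: "compress e = xs" using compress_expand[of xs bs] lx cb by (simp add: e_def)
      have "merge_slots n m \<Psi> e = \<Psi> (k, j, xs)"
        using ge True so ce S(2) index_enum_slot_set[OF jC] by (simp add: merge_slots_def S_def)
      then show ?thesis using ze t by simp
    next
      case False
      have "\<Psi> (k, j, xs) = 0" using DSum_eq_0[OF D] False by blast
      then show ?thesis using ze t ge False by (simp add: merge_slots_def)
    qed
  qed
qed

lemma lin_on_split_slots: "lin_on V (split_slots n m)"
  unfolding lin_on_def split_slots_def by (auto simp: fun_eq_iff)

lemma fibre_expand:
  assumes ly: "length ys = count_True bs"
  shows "fibre m f (expand bs ys) = expand bs ` {xs \<in> tuples {..<m} (length ys). map f xs = ys}"
proof (intro set_eqI iffI)
  fix w assume w: "w \<in> fibre m f (expand bs ys)"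
  have mw: "map (map_option f) w = expand bs ys" and wt: "w \<in> tuples (optset m) (length bs)"
    using w by (auto simp: fibre_def)
  have pw: "some_pattern w = bs" using some_pattern_map_option[of f w] mw some_pattern_expand[OF ly] by simp
  define xs where "xs = compress w"
  have lx: "length xs = count_True bs" using length_compress[of w] pw xs_def by simp
  have we: "w = expand bs xs" using expand_some_pattern_compress[of w] pw xs_def by simp
  have "expand bs (map f xs) = map (map_option f) w" using map_option_expand[OF lx, of f] we by simp
  then have "expand bs (map f xs) = expand bs ys" using mw by simp
  then have "compress (expand bs (map f xs)) = compress (expand bs ys)" by simp
  then have mf: "map f xs = ys" using compress_expand[of "map f xs" bs] compress_expand[OF ly] lx by simp
  have "xs \<in> tuples {..<m} (length xs)" using expand_in_tuples_iff[OF lx, of m] wt we by simp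
  then show "w \<in> expand bs ` {xs \<in> tuples {..<m} (length ys). map f xs = ys}"
    using we mf lx ly by auto
next
  fix w assume "w \<in> expand bs ` {xs \<in> tuples {..<m} (length ys). map f xs = ys}"
  then obtain xs where xs: "w = expand bs xs" "xs \<in> tuples {..<m} (length ys)" "map f xs = ys" by blast
  have lx: "length xs = count_True bs" using xs(2) ly by (simp add: tuples_def)
  have "w \<in> tuples (optset m) (length bs)" using expand_in_tuples_iff[OF lx, of m] xs(1,2) lx ly by (simp add: tuples_def)
  moreover have "map (map_option f) w = expand bs ys" using map_option_expand[OF lx, where f=f] xs(1,3) by simp
  ultimately show "w \<in> fibre m f (expand bs ys)" by (simp add: fibre_def)
qed

lemma split_slots_natural:
  fixes \<Phi> :: "nat option list \<Rightarrow> 'k::field"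
  shows "split_slots n m' (PPbarKbar_act m m' f \<Phi>) = DSum_act m m' f (split_slots n m \<Phi>)"
proof
  fix t :: "nat \<times> nat \<times> nat list"
  obtain k j ys where t: "t = (k, j, ys)" by (cases t) auto
  have R: "DSum_act m m' f (split_slots n m \<Phi>) t
      = (\<Sum>xs\<in>{xs \<in> tuples {..<m} (length ys). map f xs = ys}. split_slots n m \<Phi> (k, j, xs))"
    unfolding t DSum_act_def lpush_def prod.case ..
  show "split_slots n m' (PPbarKbar_act m m' f \<Phi>) t = DSum_act m m' f (split_slots n m \<Phi>) t"
  proof (cases "k \<le> n \<and> j < n choose k \<and> length ys = Suc k")
    case False
    have "split_slots n m \<Phi> (k, j, xs) = 0" if "xs \<in> {xs \<in> tuples {..<m} (length ys). map f xs = ys}" for xs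
      using that False by (auto simp: split_slots_def tuples_def)
    then have "DSum_act m m' f (split_slots n m \<Phi>) t = 0" using R by simp
    then show ?thesis using False by (auto simp: t split_slots_def)
  next
    case True
    then have kn: "k \<le> n" and jC: "j < n choose k" and ly: "length ys = Suc k" by auto
    define S where "S = enum_slot_set n k j"
    have S: "S \<subseteq> {1..n}" "card S = k" using enum_slot_set_props[OF jC] S_def by auto
    define bs where "bs = slot_mask n S"
    have cb: "count_True bs = Suc k" using count_True_slot_mask[OF S(1)] S(2) bs_def by simp
    define A where "A = {xs \<in> tuples {..<m} (length ys). map f xs = ys}"
    have inj: "inj_on (expand bs) A"
      by (rule inj_on_subset[OF inj_on_expand]) (auto simp: A_def tuples_def ly cb)
    have "split_slots n m' (PPbarKbar_act m m' f \<Phi>) t = PPbarKbar_act m m' f \<Phi> (expand bs ys)"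
      unfolding t split_slots_def prod.case bs_def S_def using True by (rule if_P)
    also have "\<dots> = (\<Sum>w\<in>fibre m f (expand bs ys). \<Phi> w)"
      unfolding PPbarKbar_act_def by (rule lpush_option_fibre)
    also have "fibre m f (expand bs ys) = expand bs ` A" unfolding A_def by (rule fibre_expand) (simp add: ly cb)
    also have "(\<Sum>w\<in>expand bs ` A. \<Phi> w) = (\<Sum>xs\<in>A. \<Phi> (expand bs xs))" by (rule sum.reindex_cong[OF inj refl refl])
    also have "\<dots> = (\<Sum>xs\<in>A. split_slots n m \<Phi> (k, j, xs))"
    proof (rule sum.cong[OF refl])
      fix xs assume "xs \<in> A"
      then have "length xs = Suc k" using ly by (simp add: A_def tuples_def)
      then have c: "k \<le> n \<and> j < n choose k \<and> length xs = Suc k" using kn jC by simp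
      show "\<Phi> (expand bs xs) = split_slots n m \<Phi> (k, j, xs)"
        unfolding split_slots_def prod.case if_P[OF c] bs_def S_def ..
    qed
    finally show ?thesis unfolding R A_def .
  qed
qed

lemma PPbarKbar_iso_DSum:
  "fa_isomorphic (PPbarKbar n :: (nat option list, 'k::field) fa_obj) PPbarKbar_act (DSum n) DSum_act"
proof (rule fa_isomorphicI[where \<theta>="merge_slots n"])
  show "fa_nat (PPbarKbar n :: (nat option list, 'k) fa_obj) PPbarKbar_act (DSum n) DSum_act (split_slots n)"
    unfolding fa_nat_def using lin_on_split_slots split_slots_mem split_slots_natural by blast
qed (use merge_slots_mem merge_split_slots split_merge_slots in auto)

theorem mainTheorem3:
  fixes n :: nat
  shows "(\<forall>m. (PPbar n m :: (nat list \<Rightarrow> 'k::field) set) \<subseteq> PFA (Suc n) m)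
    \<and> fa_module (PPbar n :: (nat list, 'k) fa_obj) PFA_act
    \<and> (\<exists>C :: (nat list, 'k) fa_obj. fa_module C PFA_act \<and>
         (\<forall>m. C m \<subseteq> PFA (Suc n) m \<and> PPbar n m \<inter> C m = {\<lambda>_. 0} \<and>
              {(\<lambda>xs. u xs + v xs) | u v. u \<in> PPbar n m \<and> v \<in> C m} = PFA (Suc n) m))
    \<and> fa_projective TYPE('a) (PPbar n :: (nat list, 'k) fa_obj) PFA_act
    \<and> fa_isomorphic (PFA (Suc n) :: (nat list, 'k) fa_obj) PFA_act (PPbarKbar n) PPbarKbar_act
    \<and> fa_isomorphic (PPbarKbar n :: (nat option list, 'k) fa_obj) PPbarKbar_act (DSum n) DSum_act
    \<and> fa_isomorphic (PFA (Suc n) :: (nat list, 'k) fa_obj) PFA_act (DSum n) DSum_act"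
proof (intro conjI)
  show "\<forall>m. (PPbar n m :: (nat list \<Rightarrow> 'k) set) \<subseteq> PFA (Suc n) m"
    using PPbar_PFA by blast
  show "\<exists>C :: (nat list, 'k) fa_obj. fa_module C PFA_act \<and>
         (\<forall>m. C m \<subseteq> PFA (Suc n) m \<and> PPbar n m \<inter> C m = {\<lambda>_. 0} \<and>
              {(\<lambda>xs. u xs + v xs) | u v. u \<in> PPbar n m \<and> v \<in> C m} = PFA (Suc n) m)"
    using fa_module_PPbar_kernel PPbar_kernel_complement by blast
  show "fa_isomorphic (PFA (Suc n) :: (nat list, 'k) fa_obj) PFA_act (DSum n) DSum_act"
    by (rule fa_isomorphic_trans[OF PFA_iso_PPbarKbar PPbarKbar_iso_DSum])
qed (rule fa_module_PPbar fa_projective_PPbar PFA_iso_PPbarKbar PPbarKbar_iso_DSum)+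

end
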